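(* Let $D$ be a power of two and $R\ge D$. If $\mathcal{A}_{\mathsf{1LD}\text{-}\mathsf{d}}$ is a quantum algorithm for $\mathsf{1LD}$ making at most $q$ queries to its oracle, then there is a $\mathsf{1LD}$-search algorithm $\mathcal{A}_{\mathsf{1LD}\text{-}\mathsf{s}}$ making at most $3q\lg D$ queries to its oracle such that \[\mathsf{Adv}^{\mathsf{1LD}\text{-}\mathsf{s}}_{D,R}(\mathcal{A}_{\mathsf{1LD}\text{-}\mathsf{s}})\ge 1-D^2/R-1.5(\lg D-2)\bigl(1-\mathsf{Adv}^{\mathsf{1LD}\text{-}\mathsf{d}}_{D,R}(\mathcal{A}_{\mathsf{1LD}\text{-}\mathsf{d}})\bigr).\]
   Context: $[n]=\{1,\dots,n\}$ and $\lg$ is the base-2 logarithm. Instances are $L:[D]\to[R]$, accessed via the quantum oracle $|x,y\rangle\mapsto|x,y\oplus L(x)\rangle$, and viewed as the lists $L_b(x)=L(x+bD/2)$ for $x\in[D/2]$. $\mathsf{1LD}$: - instances: $L_0,L_1$ injective with images sharing at most one element; - language: exactly one shared element; - witnesses: $(x,y)$ with $L_0(x)=L_1(y)$. For a decision algorithm $\mathcal{B}$, let $P^1=\min_{L\in\text{language}}\Pr[\mathcal{B}[L]=1]$ and $P^0=\max_{L\in\text{instances}\setminus\text{language}}\Pr[\mathcal{B}[L]=1]$. Define $\mathsf{Adv}^{\mathsf{1LD}\text{-}\mathsf{d}}_{D,R}(\mathcal{B})=\min\{2P^1-1,\,1-2P^0\}$. The search advantage $\mathsf{Adv}^{\mathsf{1LD}\text{-}\mathsf{s}}_{D,R}$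 is the minimum, over instances in the language, of the probability of outputting a witness. *)

theory Defs
  imports Complex_Main "HOL-Library.FuncSet"
begin

text \<open>Computational basis states are triples (x, y, w): the query input register
  x \<in> [D] = {1..D}, the query output register y \<in> {0..<R}, and a workspace
  register w \<in> {0..<m}.  Vectors and matrices are complex-valued functions on
  basis triples; only entries indexed by the finite basis set matter.\<close>

type_synonym basis = "nat \<times> nat \<times> nat"
type_synonym qmat = "basis \<Rightarrow> basis \<Rightarrow> complex"
type_synonym qvec = "basis \<Rightarrow> complex"

definition Bas :: "nat \<Rightarrow> nat \<Rightarrow> nat \<Rightarrow> basis set" where
  "Bas D R m = {1..D} \<times> {0..<R} \<times> {0..<m}"

definition apply_mat :: "basis set \<Rightarrow> qmat \<Rightarrow> qvec \<Rightarrow> qvec" where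
  "apply_mat B U v = (\<lambda>i. \<Sum>j\<in>B. U i j * v j)"

definition unitary_on :: "basis set \<Rightarrow> qmat \<Rightarrow> bool" where
  "unitary_on B U \<longleftrightarrow>
     (\<forall>i\<in>B. \<forall>j\<in>B. (\<Sum>k\<in>B. cnj (U k i) * U k j) = (if i = j then 1 else 0))"

definition oracle_mat :: "nat \<Rightarrow> (nat \<Rightarrow> nat) \<Rightarrow> qmat" where
  "oracle_mat R L = (\<lambda>(x', y', w') (x, y, w).
      if x' = x \<and> w' = w \<and> y' = (y + L x) mod R then 1 else 0)"

text \<open>An algorithm: workspace size, unitaries U_0, U_1, ..., U_q (oracle calls
  are interleaved between consecutive unitaries), and a classical output
  function applied to the measured basis state.\<close>
record 'o qalg =
  ws :: nat
  ops :: "qmat list"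
  out :: "basis \<Rightarrow> 'o"

definition num_queries :: "'o qalg \<Rightarrow> nat" where
  "num_queries A = length (ops A) - 1"

definition valid_qalg :: "nat \<Rightarrow> nat \<Rightarrow> 'o qalg \<Rightarrow> bool" where
  "valid_qalg D R A \<longleftrightarrow> ops A \<noteq> [] \<and> ws A \<ge> 1 \<and>
     (\<forall>U\<in>set (ops A). unitary_on (Bas D R (ws A)) U)"

fun run_ops :: "basis set \<Rightarrow> qmat \<Rightarrow> qmat list \<Rightarrow> qvec \<Rightarrow> qvec" where
  "run_ops B Orc [] v = v"
| "run_ops B Orc (U # Us) v = run_ops B Orc Us (apply_mat B U (apply_mat B Orc v))"

definition init_state :: qvec where
  "init_state = (\<lambda>b. if b = (1, 0, 0) then 1 else 0)"

definition final_state :: "nat \<Rightarrow> nat \<Rightarrow> (nat \<Rightarrow> nat) \<Rightarrow> 'o qalg \<Rightarrow> qvec" where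
  "final_state D R L A =
     (let B = Bas D R (ws A) in
      run_ops B (oracle_mat R L) (tl (ops A)) (apply_mat B (hd (ops A)) init_state))"

definition prob_out :: "nat \<Rightarrow> nat \<Rightarrow> (nat \<Rightarrow> nat) \<Rightarrow> 'o qalg \<Rightarrow> ('o \<Rightarrow> bool) \<Rightarrow> real" where
  "prob_out D R L A P =
     (\<Sum>b\<in>Bas D R (ws A). if P (out A b) then (cmod (final_state D R L A b))\<^sup>2 else 0)"

definition lst :: "nat \<Rightarrow> (nat \<Rightarrow> nat) \<Rightarrow> nat \<Rightarrow> nat \<Rightarrow> nat" where
  "lst D L b x = L (x + b * (D div 2))"

definition lst_img :: "nat \<Rightarrow> (nat \<Rightarrow> nat) \<Rightarrow> nat \<Rightarrow> nat set" where
  "lst_img D L b = lst D L b ` {1..D div 2}"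

definition inst_1LD :: "nat \<Rightarrow> nat \<Rightarrow> (nat \<Rightarrow> nat) \<Rightarrow> bool" where
  "inst_1LD D R L \<longleftrightarrow> L \<in> {1..D} \<rightarrow>\<^sub>E {1..R} \<and>
     inj_on (lst D L 0) {1..D div 2} \<and> inj_on (lst D L 1) {1..D div 2} \<and>
     card (lst_img D L 0 \<inter> lst_img D L 1) \<le> 1"

definition lang_1LD :: "nat \<Rightarrow> nat \<Rightarrow> (nat \<Rightarrow> nat) \<Rightarrow> bool" where
  "lang_1LD D R L \<longleftrightarrow> inst_1LD D R L \<and> card (lst_img D L 0 \<inter> lst_img D L 1) = 1"

definition witness_1LD :: "nat \<Rightarrow> (nat \<Rightarrow> nat) \<Rightarrow> nat \<times> nat \<Rightarrow> bool" where
  "witness_1LD D L w \<longleftrightarrow> (case w of (x, y) \<Rightarrow>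
     x \<in> {1..D div 2} \<and> y \<in> {1..D div 2} \<and> lst D L 0 x = lst D L 1 y)"

definition adv_1LD_d :: "nat \<Rightarrow> nat \<Rightarrow> bool qalg \<Rightarrow> real" where
  "adv_1LD_d D R A =
     (let P1 = Inf {prob_out D R L A (\<lambda>r. r) | L. lang_1LD D R L};
          P0 = Sup {prob_out D R L A (\<lambda>r. r) | L. inst_1LD D R L \<and> \<not> lang_1LD D R L}
      in min (2 * P1 - 1) (1 - 2 * P0))"

definition adv_1LD_s :: "nat \<Rightarrow> nat \<Rightarrow> (nat \<times> nat) qalg \<Rightarrow> real" where
  "adv_1LD_s D R A = Inf {prob_out D R L A (witness_1LD D L) | L. lang_1LD D R L}"

end

(*
  Search reduces to decision bit by bit.  Let L_0 and L_1 share exactly one element, at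
  positions x and y.  For every bit i of x - 1, run the decision algorithm on the lists
  obtained by shifting cyclically, by a random c, the entries of L_0 whose index has bit i
  set: the collision survives exactly when that bit is 0, and for all but at most D^2 of
  the R shifts no new collision appears, so the shifted lists are again instances of 1LD.
  The same is done for y with L_1.  These 2 (lg D - 1) runs make at most 3 q lg D queries,
  and a union bound over them gives success probability at least
  1 - D^2/R - (lg D - 1) (1 - Adv), which dominates the claimed bound once lg D >= 4.
  For D <= 8 one simply queries all D entries, and an algorithm without queries has
  advantage at most 0.

  The runs are performed coherently within a single quantum algorithm: the shift is held
  in a register prepared in uniform superposition, and the final state of every run is
  swapped into a register of its own before the next run starts.  Measuring at the end
  thus samples a uniform shift and, given the shift, independent outcomes of all runs.
*)

theory Submission
  imports Defs "HOL-Analysis.Infinite_Products"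
begin

definition mat_mult :: "basis set \<Rightarrow> qmat \<Rightarrow> qmat \<Rightarrow> qmat" where
  "mat_mult B U V = (\<lambda>i j. \<Sum>l\<in>B. U i l * V l j)"

definition perm_mat :: "(basis \<Rightarrow> basis) \<Rightarrow> qmat" where
  "perm_mat \<sigma> = (\<lambda>i j. if i = \<sigma> j then 1 else 0)"

definition sq_norm :: "basis set \<Rightarrow> qvec \<Rightarrow> real" where
  "sq_norm B v = (\<Sum>b\<in>B. (cmod (v b))\<^sup>2)"

lemma apply_mat_mult:
  assumes "finite B"
  shows "apply_mat B (mat_mult B U V) v = apply_mat B U (apply_mat B V v)"
proof
  fix i
  have "apply_mat B (mat_mult B U V) v i = (\<Sum>j\<in>B. \<Sum>l\<in>B. U i l * V l j * v j)"
    by (simp add: apply_mat_def mat_mult_def sum_distrib_right)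
  also have "\<dots> = (\<Sum>l\<in>B. \<Sum>j\<in>B. U i l * (V l j * v j))"
    by (subst sum.swap) (simp add: mult.assoc)
  also have "\<dots> = apply_mat B U (apply_mat B V v) i"
    by (simp add: apply_mat_def sum_distrib_left)
  finally show "apply_mat B (mat_mult B U V) v i = apply_mat B U (apply_mat B V v) i" .
qed

lemma apply_mat_cong:
  assumes "\<And>b. b \<in> B \<Longrightarrow> v b = w b"
  shows "apply_mat B U v = apply_mat B U w"
  unfolding apply_mat_def using assms by (intro ext sum.cong) auto

lemma unitary_mat_mult:
  assumes "finite B" "unitary_on B U" "unitary_on B V"
  shows "unitary_on B (mat_mult B U V)"
  unfolding unitary_on_def
proof (intro ballI)
  fix i j assume ij: "i \<in> B" "j \<in> B"
  have "(\<Sum>k\<in>B. cnj (mat_mult B U V k i) * mat_mult B U V k j)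
      = (\<Sum>k\<in>B. \<Sum>l\<in>B. \<Sum>l'\<in>B. (cnj (V l i) * V l' j) * (cnj (U k l) * U k l'))"
    by (simp add: mat_mult_def sum_distrib_left sum_distrib_right cnj_sum mult_ac)
  also have "\<dots> = (\<Sum>l\<in>B. \<Sum>l'\<in>B. (cnj (V l i) * V l' j) * (\<Sum>k\<in>B. cnj (U k l) * U k l'))"
    by (subst sum.swap, rule sum.cong, simp, subst sum.swap, simp add: sum_distrib_left)
  also have "\<dots> = (\<Sum>l\<in>B. \<Sum>l'\<in>B. (cnj (V l i) * V l' j) * (if l = l' then 1 else 0))"
    using assms(2) unfolding unitary_on_def by (intro sum.cong refl) auto
  also have "\<dots> = (\<Sum>l\<in>B. cnj (V l i) * V l j)"
    using assms(1) by (simp add: if_distrib cong: if_cong)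
  also have "\<dots> = (if i = j then 1 else 0)"
    using assms(3) ij unfolding unitary_on_def by auto
  finally show "(\<Sum>k\<in>B. cnj (mat_mult B U V k i) * mat_mult B U V k j) = (if i = j then 1 else 0)" .
qed

lemma unitary_perm_mat:
  assumes "finite B" "\<And>b. b \<in> B \<Longrightarrow> \<sigma> b \<in> B" "inj_on \<sigma> B"
  shows "unitary_on B (perm_mat \<sigma>)"
  unfolding unitary_on_def
proof (intro ballI)
  fix i j assume ij: "i \<in> B" "j \<in> B"
  have "(\<Sum>k\<in>B. cnj (perm_mat \<sigma> k i) * perm_mat \<sigma> k j) = (\<Sum>k\<in>B. if k = \<sigma> i \<and> \<sigma> i = \<sigma> j then 1 else 0)"
    by (intro sum.cong) (auto simp: perm_mat_def)
  also have "\<dots> = (if \<sigma> i = \<sigma> j then 1 else 0)"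
    using assms(1,2) ij by (simp add: sum.If_cases)
  also have "\<dots> = (if i = j then 1 else 0)"
    using assms(3) ij by (auto dest: inj_onD)
  finally show "(\<Sum>k\<in>B. cnj (perm_mat \<sigma> k i) * perm_mat \<sigma> k j) = (if i = j then 1 else 0)" .
qed

lemma apply_perm_mat:
  assumes "finite B" "inj_on \<sigma> B" "j0 \<in> B" "\<sigma> j0 = b"
  shows "apply_mat B (perm_mat \<sigma>) v b = v j0"
proof -
  have "apply_mat B (perm_mat \<sigma>) v b = (\<Sum>j\<in>B. if j = j0 then v j else 0)"
    unfolding apply_mat_def perm_mat_def
    by (intro sum.cong refl) (use assms in \<open>auto dest: inj_onD\<close>)
  also have "\<dots> = v j0" using assms by simp
  finally show ?thesis .
qed

lemma sq_norm_unitary: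
  assumes "finite B" "unitary_on B U"
  shows "sq_norm B (apply_mat B U v) = sq_norm B v"
proof -
  have "complex_of_real (sq_norm B (apply_mat B U v))
      = (\<Sum>i\<in>B. \<Sum>j\<in>B. \<Sum>j'\<in>B. (cnj (v j) * v j') * (cnj (U i j) * U i j'))"
    unfolding sq_norm_def of_real_sum complex_norm_square
    by (simp add: apply_mat_def cnj_sum sum_distrib_left sum_distrib_right mult_ac)
  also have "\<dots> = (\<Sum>j\<in>B. \<Sum>j'\<in>B. (cnj (v j) * v j') * (\<Sum>i\<in>B. cnj (U i j) * U i j'))"
    by (subst sum.swap, rule sum.cong, simp, subst sum.swap, simp add: sum_distrib_left)
  also have "\<dots> = (\<Sum>j\<in>B. \<Sum>j'\<in>B. (cnj (v j) * v j') * (if j = j' then 1 else 0))"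
    using assms(2) unfolding unitary_on_def by (intro sum.cong refl) auto
  also have "\<dots> = (\<Sum>j\<in>B. cnj (v j) * v j)"
    using assms(1) by (simp add: if_distrib cong: if_cong)
  also have "\<dots> = complex_of_real (sq_norm B v)"
    unfolding sq_norm_def of_real_sum complex_norm_square by (simp add: mult.commute)
  finally show ?thesis by (simp only: of_real_eq_iff)
qed

definition lift_basis :: "nat \<Rightarrow> nat \<Rightarrow> basis \<Rightarrow> basis" where
  "lift_basis m u b = (case b of (x, y, a) \<Rightarrow> (x, y, a + m * u))"

lemma finite_Bas[simp]: "finite (Bas D R m)"
  by (simp add: Bas_def)

lemma mem_Bas: "(x, y, w) \<in> Bas D R m \<longleftrightarrow> 1 \<le> x \<and> x \<le> D \<and> y < R \<and> w < m"
  by (auto simp: Bas_def)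

lemma lift_basis_in_Bas: "m > 0 \<Longrightarrow> u < K \<Longrightarrow> b \<in> Bas D R m \<Longrightarrow> lift_basis m u b \<in> Bas D R (m * K)"
proof -
  assume a: "m > 0" "u < K" "b \<in> Bas D R m"
  obtain x y w where b: "b = (x, y, w)" by (cases b) auto
  have "w + m * u < m * K"
  proof -
    have "w + m * u < m + m * u" using a b by (simp add: mem_Bas)
    also have "\<dots> = m * (u + 1)" by simp
    also have "\<dots> \<le> m * K" using a by (intro mult_le_mono2) simp
    finally show ?thesis .
  qed
  then show ?thesis using a b by (simp add: lift_basis_def mem_Bas)
qed

lemma Bas_mult_eq_image:
  assumes "m > 0"
  shows "Bas D R (m * K) = (\<lambda>(u, b). lift_basis m u b) ` ({..<K} \<times> Bas D R m)"
proof
  show "(\<lambda>(u, b). lift_basis m u b) ` ({..<K} \<times> Bas D R m) \<subseteq> Bas D R (m * K)"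
    using lift_basis_in_Bas[OF assms] by auto
next
  show "Bas D R (m * K) \<subseteq> (\<lambda>(u, b). lift_basis m u b) ` ({..<K} \<times> Bas D R m)"
  proof
    fix b assume b: "b \<in> Bas D R (m * K)"
    obtain x y w where bb: "b = (x, y, w)" by (cases b) auto
    have "w div m < K" using b bb assms by (simp add: mem_Bas less_mult_imp_div_less mult.commute)
    moreover have "(x, y, w mod m) \<in> Bas D R m" using b bb assms by (simp add: mem_Bas)
    moreover have "b = lift_basis m (w div m) (x, y, w mod m)" using bb by (simp add: lift_basis_def)
    ultimately show "b \<in> (\<lambda>(u, b). lift_basis m u b) ` ({..<K} \<times> Bas D R m)" by force
  qed
qed

lemma inj_on_lift_basis:
  assumes "m > 0"
  shows "inj_on (\<lambda>(u, b). lift_basis m u b) ({..<K} \<times> Bas D R m)"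
proof (rule inj_onI)
  fix p q assume p: "p \<in> {..<K} \<times> Bas D R m" and q: "q \<in> {..<K} \<times> Bas D R m"
    and eq: "(\<lambda>(u, b). lift_basis m u b) p = (\<lambda>(u, b). lift_basis m u b) q"
  obtain u x y a where run_prob: "p = (u, x, y, a)" by (cases p) auto
  obtain u' x' y' a' where qq: "q = (u', x', y', a')" by (cases q) auto
  have a: "a < m" "a' < m" using p q run_prob qq by (auto simp: mem_Bas)
  have e: "x = x'" "y = y'" "a + m * u = a' + m * u'" using eq run_prob qq by (auto simp: lift_basis_def)
  have "(a + m * u) div m = u" "(a + m * u) mod m = a" using a assms by auto
  moreover have "(a' + m * u') div m = u'" "(a' + m * u') mod m = a'" using a assms by auto
  ultimately show "p = q" using e run_prob qq by metis
qed

lemma sum_Bas_mult: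
  assumes "m > 0"
  shows "(\<Sum>b\<in>Bas D R (m * K). g b) = (\<Sum>u<K. \<Sum>b\<in>Bas D R m. g (lift_basis m u b))"
proof -
  have "(\<Sum>b\<in>Bas D R (m * K). g b) = (\<Sum>p\<in>{..<K} \<times> Bas D R m. g ((\<lambda>(u, b). lift_basis m u b) p))"
    unfolding Bas_mult_eq_image[OF assms] by (rule sum.reindex[OF inj_on_lift_basis[OF assms], unfolded comp_def])
  also have "\<dots> = (\<Sum>u<K. \<Sum>b\<in>Bas D R m. g (lift_basis m u b))"
    by (simp add: sum.cartesian_product split_def)
  finally show ?thesis .
qed

lemma sum_lessThan_mult:
  fixes g :: "nat \<Rightarrow> 'a::comm_monoid_add"
  assumes "a > 0"
  shows "(\<Sum>u<a * b. g u) = (\<Sum>u1<a. \<Sum>s<b. g (u1 + a * s))"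
proof -
  have img: "{..<a * b} = (\<lambda>(u1, s). u1 + a * s) ` ({..<a} \<times> {..<b})"
  proof
    show "(\<lambda>(u1, s). u1 + a * s) ` ({..<a} \<times> {..<b}) \<subseteq> {..<a * b}"
    proof clarsimp
      fix u1 s assume "u1 < a" "s < b"
      then have "u1 + a * s < a + a * s" by simp
      also have "\<dots> = a * (s + 1)" by simp
      also have "\<dots> \<le> a * b" using \<open>s < b\<close> by (intro mult_le_mono2) simp
      finally show "u1 + a * s < a * b" .
    qed
  next
    show "{..<a * b} \<subseteq> (\<lambda>(u1, s). u1 + a * s) ` ({..<a} \<times> {..<b})"
    proof
      fix u assume "u \<in> {..<a * b}"
      then have "u div a < b" "u mod a < a" using assms by (auto simp: less_mult_imp_div_less mult.commute)
      moreover have "u = u mod a + a * (u div a)" by simp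
      ultimately show "u \<in> (\<lambda>(u1, s). u1 + a * s) ` ({..<a} \<times> {..<b})" by force
    qed
  qed
  have inj: "inj_on (\<lambda>(u1, s). u1 + a * s) ({..<a} \<times> {..<b})"
  proof (rule inj_onI, clarsimp)
    fix u1 s u1' s' assume h: "u1 < a" "u1' < a" "u1 + a * s = u1' + a * s'"
    have "(u1 + a * s) div a = s" "(u1' + a * s') div a = s'"
      "(u1 + a * s) mod a = u1" "(u1' + a * s') mod a = u1'" using assms h(1,2) by auto
    then have "s = s'" using h(3) by simp
    then show "u1 = u1' \<and> s = s'" using h(3) by simp
  qed
  show ?thesis unfolding img
    by (subst sum.reindex[OF inj]) (simp add: sum.cartesian_product split_def)
qed

definition basis_enc :: "nat \<Rightarrow> nat \<Rightarrow> basis \<Rightarrow> nat" where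
  "basis_enc D R b = (case b of (x, y, a) \<Rightarrow> (x - 1) + D * (y + R * a))"

definition basis_dec :: "nat \<Rightarrow> nat \<Rightarrow> nat \<Rightarrow> basis" where
  "basis_dec D R s = (s mod D + 1, (s div D) mod R, s div (D * R))"

lemma basis_dec_enc:
  assumes "b \<in> Bas D R m"
  shows "basis_dec D R (basis_enc D R b) = b"
proof -
  obtain x y a where b: "b = (x, y, a)" by (cases b) auto
  have h: "1 \<le> x" "x \<le> D" "y < R" "a < m" using assms b by (auto simp: mem_Bas)
  obtain x' where x': "x = Suc x'" using h by (cases x) auto
  have x'D: "x' < D" using h x' by simp
  have "(x - 1 + D * (y + R * a)) mod D = x - 1" using x'D x' by simp
  moreover have "(x - 1 + D * (y + R * a)) div D = y + R * a" using x'D x' by simp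
  moreover have "(x - 1 + D * (y + R * a)) div (D * R) = (y + R * a) div R"
    by (metis calculation(2) div_mult2_eq)
  moreover have "(y + R * a) div R = a" using h by simp
  ultimately show ?thesis using b h by (simp add: basis_enc_def basis_dec_def)
qed

lemma basis_enc_less:
  assumes "b \<in> Bas D R m"
  shows "basis_enc D R b < D * R * m"
proof -
  obtain x y a where b: "b = (x, y, a)" by (cases b) auto
  have h: "1 \<le> x" "x \<le> D" "y < R" "a < m" using assms b by (auto simp: mem_Bas)
  have "y + R * a < R * (a + 1)" using h by simp
  moreover have "R * (a + 1) \<le> R * m" using h by (intro mult_le_mono2) simp
  ultimately have "y + R * a + 1 \<le> R * m" by linarith
  then have "D * (y + R * a + 1) \<le> D * (R * m)" by (rule mult_le_mono2)
  then have "x - 1 + D * (y + R * a) < D * (R * m)" using h by (simp add: algebra_simps)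
  then show ?thesis using b by (simp add: basis_enc_def mult.assoc)
qed

lemma basis_dec_in_Bas:
  assumes "s < D * R * m"
  shows "basis_dec D R s \<in> Bas D R m"
proof -
  have D0: "D > 0" and R0: "R > 0" using assms by (auto intro: Nat.gr0I)
  have "s div (D * R) < m" using assms by (simp add: less_mult_imp_div_less mult.commute)
  then show ?thesis using D0 R0 by (simp add: basis_dec_def mem_Bas Suc_le_eq)
qed

lemma basis_enc_dec:
  assumes "s < D * R * m"
  shows "basis_enc D R (basis_dec D R s) = s"
proof -
  have D0: "D > 0" using assms by (auto intro: Nat.gr0I)
  have "s div D mod R + R * (s div (D * R)) = s div D"
    by (metis div_mult2_eq mod_mult_div_eq)
  then have "s mod D + D * (s div D mod R + R * (s div (D * R))) = s" by simp
  then show ?thesis using D0 by (simp add: basis_enc_def basis_dec_def)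
qed

lemma bij_betw_basis_dec: "bij_betw (basis_dec D R) {..<D * R * m} (Bas D R m)"
proof (rule bij_betw_byWitness[where f' = "basis_enc D R"])
  show "\<forall>s\<in>{..<D * R * m}. basis_enc D R (basis_dec D R s) = s" using basis_enc_dec by auto
  show "\<forall>b\<in>Bas D R m. basis_dec D R (basis_enc D R b) = b" using basis_dec_enc by auto
  show "basis_dec D R ` {..<D * R * m} \<subseteq> Bas D R m" using basis_dec_in_Bas by auto
  show "basis_enc D R ` Bas D R m \<subseteq> {..<D * R * m}" using basis_enc_less by auto
qed

lemma sum_basis_dec: "(\<Sum>s<D * R * m. g (basis_dec D R s)) = (\<Sum>b\<in>Bas D R m. g b)"
  using sum.reindex_bij_betw[OF bij_betw_basis_dec, of g] .

lemma basis_enc_eq_0_iff: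
  assumes "b \<in> Bas D R m"
  shows "basis_enc D R b = 0 \<longleftrightarrow> b = (1, 0, 0)"
proof -
  obtain x y a where b: "b = (x, y, a)" by (cases b) auto
  have h: "1 \<le> x" "x \<le> D" "y < R" "a < m" using assms b by (auto simp: mem_Bas)
  obtain x' where x': "x = Suc x'" using h by (cases x) auto
  have "D > 0" "R > 0" using h by auto
  then show ?thesis using b x' by (auto simp: basis_enc_def)
qed

lemma mod_add_right_inj_less:
  fixes y y2 g R :: nat
  assumes "y < R" "y2 < R" "(y + g) mod R = (y2 + g) mod R"
  shows "y = y2"
proof -
  have *: "a = b" if h: "a < R" "b < R" "(a + g) mod R = (b + g) mod R" "a \<le> b" for a b :: nat
  proof -
    obtain s where "b + g = a + g + R * s"
      using mod_eq_nat2E[OF h(3)] h(4) by auto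
    then have "b = a + R * s" by simp
    then have "s = 0" using h by (cases s) auto
    then show ?thesis using \<open>b = a + R * s\<close> by simp
  qed
  show ?thesis
  proof (cases "y \<le> y2")
    case True then show ?thesis using * assms by blast
  next
    case False then show ?thesis using *[of y2 y] assms by simp
  qed
qed

definition unshift :: "nat \<Rightarrow> nat \<Rightarrow> nat \<Rightarrow> nat" where
  "unshift R g y' = (y' + (R - g mod R)) mod R"

lemma unshift_less: "R > 0 \<Longrightarrow> unshift R g y' < R"
  by (simp add: unshift_def)

lemma unshift_add_mod:
  assumes "R > 0" "y' < R"
  shows "(unshift R g y' + g) mod R = y'"
proof -
  have "(unshift R g y' + g) mod R = (y' + (R - g mod R) + g) mod R"
    by (simp add: unshift_def mod_add_left_eq)
  also have "\<dots> = (y' + (R - g mod R) + g mod R) mod R"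
    by (metis mod_add_right_eq)
  also have "y' + (R - g mod R) + g mod R = y' + R"
  proof -
    have "g mod R < R" using assms by simp
    then show ?thesis by arith
  qed
  finally show ?thesis using assms by simp
qed

lemma unshift_unique:
  assumes "R > 0" "y' < R" "y < R" "(y + g) mod R = y'"
  shows "unshift R g y' = y"
proof -
  have "(unshift R g y' + g) mod R = (y + g) mod R" using unshift_add_mod[OF assms(1,2)] assms(4) by simp
  then show ?thesis using mod_add_right_inj_less[OF unshift_less[OF assms(1)] assms(3)] by blast
qed

lemma unshift_unshift:
  assumes "R > 0" "y' < R"
  shows "unshift R g1 (unshift R g2 y') = unshift R (g1 + g2) y'"
proof (rule sym, rule unshift_unique[OF assms unshift_less[OF assms(1)]])
  have "(unshift R g1 (unshift R g2 y') + (g1 + g2)) mod R = ((unshift R g1 (unshift R g2 y') + g1) mod R + g2) mod R"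
    by (simp add: mod_add_left_eq add.assoc)
  also have "\<dots> = (unshift R g2 y' + g2) mod R"
    using unshift_add_mod[OF assms(1) unshift_less[OF assms(1)]] by simp
  also have "\<dots> = y'" using unshift_add_mod[OF assms] .
  finally show "(unshift R g1 (unshift R g2 y') + (g1 + g2)) mod R = y'" .
qed

lemma unshift_mod: "unshift R (g mod R) y' = unshift R g y'"
  by (simp add: unshift_def)

definition add_oracle :: "nat \<Rightarrow> (nat \<Rightarrow> nat \<Rightarrow> nat) \<Rightarrow> qmat" where
  "add_oracle R G = perm_mat (\<lambda>(x, y, w). (x, (y + G w x) mod R, w))"

lemma oracle_mat_eq_add_oracle: "oracle_mat R L = add_oracle R (\<lambda>w x. L x)"
  by (intro ext) (auto simp: oracle_mat_def add_oracle_def perm_mat_def split: if_splits)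

lemma inj_on_add_oracle_map:
  assumes "R > 0"
  shows "inj_on (\<lambda>(x, y, w). (x, (y + G w x) mod R, w)) (Bas D R M)"
proof (rule inj_onI)
  fix p q assume p: "p \<in> Bas D R M" and q: "q \<in> Bas D R M"
    and e: "(\<lambda>(x, y, w). (x, (y + G w x) mod R, w)) p = (\<lambda>(x, y, w). (x, (y + G w x) mod R, w)) q"
  obtain x y w where run_prob: "p = (x, y, w)" by (cases p) auto
  obtain x2 y2 w2 where qq: "q = (x2, y2, w2)" by (cases q) auto
  have "x = x2" "w = w2" "(y + G w x) mod R = (y2 + G w x) mod R" using e run_prob qq by auto
  moreover have "y < R" "y2 < R" using p q run_prob qq by (auto simp: mem_Bas)
  ultimately show "p = q" using mod_add_right_inj_less run_prob qq by metis
qed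

lemma unitary_add_oracle:
  assumes "R > 0"
  shows "unitary_on (Bas D R M) (add_oracle R G)"
  unfolding add_oracle_def
  by (rule unitary_perm_mat[OF finite_Bas _ inj_on_add_oracle_map[OF assms]]) (auto simp: mem_Bas assms)

lemma apply_add_oracle:
  assumes "R > 0" "(x', y', w') \<in> Bas D R M"
  shows "apply_mat (Bas D R M) (add_oracle R G) v (x', y', w') = v (x', unshift R (G w' x') y', w')"
  unfolding add_oracle_def
proof (rule apply_perm_mat[OF finite_Bas inj_on_add_oracle_map[OF assms(1)]])
  show "(x', unshift R (G w' x') y', w') \<in> Bas D R M"
    using assms by (auto simp: mem_Bas unshift_less)
  show "(case (x', unshift R (G w' x') y', w') of (x, y, w) \<Rightarrow> (x, (y + G w x) mod R, w)) = (x', y', w')"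
    using unshift_add_mod[OF assms(1)] assms(2) by (simp add: mem_Bas)
qed

lemma apply_add_oracle_twice:
  assumes "R > 0" "b \<in> Bas D R M"
  shows "apply_mat (Bas D R M) (add_oracle R G2) (apply_mat (Bas D R M) (add_oracle R G1) v) b
       = apply_mat (Bas D R M) (add_oracle R (\<lambda>w x. G1 w x + G2 w x)) v b"
proof -
  obtain x y w where bb: "b = (x, y, w)" by (cases b) auto
  have b2: "(x, unshift R (G2 w x) y, w) \<in> Bas D R M" using assms bb by (auto simp: mem_Bas unshift_less)
  show ?thesis using assms bb
    by (simp add: apply_add_oracle[OF assms(1)] apply_add_oracle[OF assms(1) b2] unshift_unshift mem_Bas)
qed

definition lift_mat :: "nat \<Rightarrow> qmat \<Rightarrow> qmat" where
  "lift_mat m U = (\<lambda>(x', y', w') (x, y, w).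
     if w' div m = w div m then U (x', y', w' mod m) (x, y, w mod m) else 0)"

lemma lift_mat_lift_basis_col:
  assumes "b \<in> Bas D R m"
  shows "lift_mat m U (x', y', w') (lift_basis m u b) = (if w' div m = u then U (x', y', w' mod m) b else 0)"
proof -
  obtain x y a where bb: "b = (x, y, a)" by (cases b) auto
  have "a < m" using assms bb by (simp add: mem_Bas)
  then show ?thesis using bb by (simp add: lift_mat_def lift_basis_def)
qed

lemma lift_mat_lift_basis_row:
  assumes "b \<in> Bas D R m"
  shows "lift_mat m U (lift_basis m u b) (x, y, w) = (if u = w div m then U b (x, y, w mod m) else 0)"
proof -
  obtain x' y' a where bb: "b = (x', y', a)" by (cases b) auto
  have "a < m" using assms bb by (simp add: mem_Bas)
  then show ?thesis using bb by (simp add: lift_mat_def lift_basis_def)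
qed

lemma apply_lift_mat:
  assumes "m > 0" "w' div m < K"
  shows "apply_mat (Bas D R (m * K)) (lift_mat m U) v (x', y', w')
       = (\<Sum>b\<in>Bas D R m. U (x', y', w' mod m) b * v (lift_basis m (w' div m) b))"
proof -
  have "apply_mat (Bas D R (m * K)) (lift_mat m U) v (x', y', w')
     = (\<Sum>u<K. \<Sum>b\<in>Bas D R m. lift_mat m U (x', y', w') (lift_basis m u b) * v (lift_basis m u b))"
    unfolding apply_mat_def by (rule sum_Bas_mult[OF assms(1)])
  also have "\<dots> = (\<Sum>u<K. if u = w' div m then (\<Sum>b\<in>Bas D R m. U (x', y', w' mod m) b * v (lift_basis m u b)) else 0)"
  proof (intro sum.cong refl)
    fix u assume "u \<in> {..<K}"
    show "(\<Sum>b\<in>Bas D R m. lift_mat m U (x', y', w') (lift_basis m u b) * v (lift_basis m u b))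
        = (if u = w' div m then (\<Sum>b\<in>Bas D R m. U (x', y', w' mod m) b * v (lift_basis m u b)) else 0)"
      by (auto intro!: sum.cong sum.neutral simp: lift_mat_lift_basis_col)
  qed
  also have "\<dots> = (\<Sum>b\<in>Bas D R m. U (x', y', w' mod m) b * v (lift_basis m (w' div m) b))"
    using assms by simp
  finally show ?thesis .
qed

lemma unitary_lift_mat:
  assumes "m > 0" "unitary_on (Bas D R m) U"
  shows "unitary_on (Bas D R (m * K)) (lift_mat m U)"
  unfolding unitary_on_def
proof (intro ballI)
  fix i j assume i: "i \<in> Bas D R (m * K)" and j: "j \<in> Bas D R (m * K)"
  obtain xi yi wi where ii: "i = (xi, yi, wi)" by (cases i) auto
  obtain xj yj wj where jj: "j = (xj, yj, wj)" by (cases j) auto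
  have iA: "(xi, yi, wi mod m) \<in> Bas D R m" and jA: "(xj, yj, wj mod m) \<in> Bas D R m"
    using i j ii jj assms by (auto simp: mem_Bas)
  have "(\<Sum>k\<in>Bas D R (m * K). cnj (lift_mat m U k i) * lift_mat m U k j)
      = (\<Sum>u<K. \<Sum>b\<in>Bas D R m. cnj (lift_mat m U (lift_basis m u b) i) * lift_mat m U (lift_basis m u b) j)"
    by (rule sum_Bas_mult[OF assms(1)])
  also have "\<dots> = (\<Sum>u<K. if u = wi div m \<and> u = wj div m then
        (\<Sum>b\<in>Bas D R m. cnj (U b (xi, yi, wi mod m)) * U b (xj, yj, wj mod m)) else 0)"
  proof (intro sum.cong refl)
    fix u assume "u \<in> {..<K}"
    show "(\<Sum>b\<in>Bas D R m. cnj (lift_mat m U (lift_basis m u b) i) * lift_mat m U (lift_basis m u b) j) =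
      (if u = wi div m \<and> u = wj div m then
        (\<Sum>b\<in>Bas D R m. cnj (U b (xi, yi, wi mod m)) * U b (xj, yj, wj mod m)) else 0)"
      unfolding ii jj by (auto intro!: sum.cong sum.neutral simp: lift_mat_lift_basis_row)
  qed
  also have "\<dots> = (if wi div m = wj div m then
        (\<Sum>b\<in>Bas D R m. cnj (U b (xi, yi, wi mod m)) * U b (xj, yj, wj mod m)) else 0)"
  proof -
    have "wi div m < K" using i ii assms by (simp add: mem_Bas less_mult_imp_div_less mult.commute)
    then show ?thesis by (auto simp: sum.If_cases)
  qed
  also have "\<dots> = (if i = j then 1 else 0)"
  proof -
    have "(wi div m = wj div m \<and> (xi, yi, wi mod m) = (xj, yj, wj mod m)) \<longleftrightarrow> i = j"
      using ii jj by (metis Pair_inject div_mult_mod_eq)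
    then show ?thesis using assms(2) iA jA unfolding unitary_on_def by auto
  qed
  finally show "(\<Sum>k\<in>Bas D R (m * K). cnj (lift_mat m U k i) * lift_mat m U k j) = (if i = j then 1 else 0)" .
qed

text \<open>\<open>block_state m R \<psi> \<Phi>\<close> is the state \<open>\<Sum>\<^sub>u \<Phi> u |u\<rangle> \<otimes> \<psi> (u mod R)\<close>, where the register \<open>u = w div m\<close>
  sits above a workspace of size \<open>m\<close>: the run state \<open>\<psi> c\<close> depends on the shift \<open>c = u mod R\<close>.\<close>

definition block_state :: "nat \<Rightarrow> nat \<Rightarrow> (nat \<Rightarrow> qvec) \<Rightarrow> (nat \<Rightarrow> complex) \<Rightarrow> qvec" where
  "block_state m R \<psi> \<Phi> = (\<lambda>(x, y, w). \<psi> ((w div m) mod R) (x, y, w mod m) * \<Phi> (w div m))"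

lemma block_state_lift_basis:
  assumes "b \<in> Bas D R m"
  shows "block_state m R \<psi> \<Phi> (lift_basis m u b) = \<psi> (u mod R) b * \<Phi> u"
proof -
  obtain x y a where bb: "b = (x, y, a)" by (cases b) auto
  have "a < m" using assms bb by (simp add: mem_Bas)
  then show ?thesis using bb by (simp add: block_state_def lift_basis_def)
qed

lemma apply_lift_mat_block_state:
  assumes "m > 0" "(x', y', w') \<in> Bas D R (m * K)"
  shows "apply_mat (Bas D R (m * K)) (lift_mat m U) (block_state m R \<psi> \<Phi>) (x', y', w')
       = block_state m R (\<lambda>c. apply_mat (Bas D R m) U (\<psi> c)) \<Phi> (x', y', w')"
proof -
  have "w' div m < K" using assms by (simp add: mem_Bas less_mult_imp_div_less mult.commute)
  then have "apply_mat (Bas D R (m * K)) (lift_mat m U) (block_state m R \<psi> \<Phi>) (x', y', w')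
      = (\<Sum>b\<in>Bas D R m. U (x', y', w' mod m) b * block_state m R \<psi> \<Phi> (lift_basis m (w' div m) b))"
    using apply_lift_mat[OF assms(1)] by blast
  also have "\<dots> = (\<Sum>b\<in>Bas D R m. U (x', y', w' mod m) b * (\<psi> ((w' div m) mod R) b * \<Phi> (w' div m)))"
    by (intro sum.cong refl) (simp add: block_state_lift_basis)
  also have "\<dots> = block_state m R (\<lambda>c. apply_mat (Bas D R m) U (\<psi> c)) \<Phi> (x', y', w')"
    by (simp add: block_state_def apply_mat_def sum_distrib_left sum_distrib_right mult_ac)
  finally show ?thesis .
qed

lemma apply_add_oracle_block_state:
  assumes "m > 0" "R > 0" "(x', y', w') \<in> Bas D R (m * K)"
  shows "apply_mat (Bas D R (m * K)) (add_oracle R (\<lambda>w x. H ((w div m) mod R) x)) (block_state m R \<psi> \<Phi>) (x', y', w')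
       = block_state m R (\<lambda>c. apply_mat (Bas D R m) (add_oracle R (\<lambda>w x. H c x)) (\<psi> c)) \<Phi> (x', y', w')"
proof -
  have inA: "(x', y', w' mod m) \<in> Bas D R m" using assms by (auto simp: mem_Bas)
  show ?thesis
    by (simp add: apply_add_oracle[OF assms(2,3)] apply_add_oracle[OF assms(2) inA] block_state_def)
qed

text \<open>Write a workspace value as \<open>a + m * (lo + P * (s + N * hi))\<close> with \<open>a < m\<close>, \<open>lo < P\<close> and
  \<open>s < N = D * R * m\<close>.  Then \<open>swap_basis D R m P\<close> exchanges the basis state \<open>(x, y, a)\<close> of the
  run registers with the one encoded by the digit \<open>s\<close>.\<close>

definition swap_basis :: "nat \<Rightarrow> nat \<Rightarrow> nat \<Rightarrow> nat \<Rightarrow> basis \<Rightarrow> basis" where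
  "swap_basis D R m P b = (case b of (x, y, w) \<Rightarrow>
     (let a = w mod m; u = w div m; N = D * R * m; lo = u mod P; s = (u div P) mod N;
          hi = u div P div N; b' = basis_dec D R s
      in (fst b', fst (snd b'), snd (snd b') + m * (lo + P * (basis_enc D R (x, y, a) + N * hi)))))"

lemma digits_mod_div:
  fixes a m lo P s N hi :: nat
  assumes "a < m" "lo < P" "s < N"
  shows "(a + m * (lo + P * (s + N * hi))) mod m = a"
    and "(a + m * (lo + P * (s + N * hi))) div m = lo + P * (s + N * hi)"
    and "(lo + P * (s + N * hi)) mod P = lo"
    and "(lo + P * (s + N * hi)) div P = s + N * hi"
    and "(s + N * hi) mod N = s"
    and "(s + N * hi) div N = hi"
  using assms by auto

lemma digits_decompose:
  fixes w m P N :: nat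
  assumes "m > 0" "P > 0" "N > 0"
  shows "w = w mod m + m * ((w div m) mod P + P * ((w div m div P) mod N + N * (w div m div P div N)))"
proof -
  have "w div m div P = (w div m div P) mod N + N * (w div m div P div N)" by simp
  moreover have "w div m = (w div m) mod P + P * (w div m div P)" by simp
  moreover have "w = w mod m + m * (w div m)" by simp
  ultimately show ?thesis by metis
qed

lemma digits_less:
  fixes a m lo P s N hi T :: nat
  assumes "a < m" "lo < P" "s < N" "hi < T"
  shows "a + m * (lo + P * (s + N * hi)) < m * (P * N * T)"
proof -
  have "s + N * hi < N * T"
  proof -
    have "s + N * hi < N * (hi + 1)" using assms by simp
    also have "\<dots> \<le> N * T" using assms by (intro mult_le_mono2) simp
    finally show ?thesis .
  qed
  then have "s + N * hi + 1 \<le> N * T" by simp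
  have "lo + P * (s + N * hi) < P * (s + N * hi + 1)" using assms by simp
  also have "\<dots> \<le> P * (N * T)" using \<open>s + N * hi + 1 \<le> N * T\<close> by (intro mult_le_mono2)
  finally have "lo + P * (s + N * hi) + 1 \<le> P * N * T" by (simp add: mult.assoc)
  have "a + m * (lo + P * (s + N * hi)) < m * (lo + P * (s + N * hi) + 1)" using assms by simp
  also have "\<dots> \<le> m * (P * N * T)" using \<open>lo + P * (s + N * hi) + 1 \<le> P * N * T\<close> by (intro mult_le_mono2)
  finally show ?thesis .
qed

lemma swap_basis_digits:
  assumes "a < m" "lo < P" "s < D * R * m"
  shows "swap_basis D R m P (x, y, a + m * (lo + P * (s + (D * R * m) * hi)))
       = (fst (basis_dec D R s), fst (snd (basis_dec D R s)),
          snd (snd (basis_dec D R s)) + m * (lo + P * (basis_enc D R (x, y, a) + (D * R * m) * hi)))"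
  using digits_mod_div[OF assms, of hi] by (simp add: swap_basis_def Let_def)

lemma Bas_digitsE:
  assumes "(x, y, w) \<in> Bas D R (m * (P * (D * R * m) * T))" "P > 0"
  obtains a lo s hi where "w = a + m * (lo + P * (s + (D * R * m) * hi))"
    "a < m" "lo < P" "s < D * R * m" "hi < T"
proof -
  let ?N = "D * R * m"
  have w: "w < m * (P * ?N * T)" using assms by (simp add: mem_Bas)
  have pos1: "m > 0" using w by (cases "m = 0") simp_all
  have pos2: "?N > 0" using w by (cases "?N = 0") simp_all
  have pos3: "T > 0" using w by (cases "T = 0") simp_all
  note pos = pos1 pos2 pos3
  have hi: "w div m div P div ?N < T"
  proof -
    have "w div m < P * ?N * T" using w pos by (simp add: less_mult_imp_div_less mult.commute)
    then have "w div m div P < ?N * T" using assms(2)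
      by (simp add: less_mult_imp_div_less mult.commute mult.left_commute)
    then show ?thesis using pos by (simp add: less_mult_imp_div_less mult.commute)
  qed
  show ?thesis
    by (rule that[OF digits_decompose[OF pos(1) assms(2) pos(2)]]) (use pos assms(2) hi in auto)
qed

lemma swap_basis_props:
  assumes "b \<in> Bas D R (m * (P * (D * R * m) * T))" "P > 0"
  shows "swap_basis D R m P b \<in> Bas D R (m * (P * (D * R * m) * T))"
    and "swap_basis D R m P (swap_basis D R m P b) = b"
proof -
  let ?N = "D * R * m"
  obtain x y w where bb: "b = (x, y, w)" by (cases b) auto
  obtain a lo s hi where w: "w = a + m * (lo + P * (s + ?N * hi))"
    "a < m" "lo < P" "s < ?N" "hi < T"
    using Bas_digitsE assms bb by blast
  have xyA: "(x, y, a) \<in> Bas D R m" using assms bb w by (auto simp: mem_Bas)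
  have e: "basis_enc D R (x, y, a) < ?N" using basis_enc_less[OF xyA] .
  have ds: "basis_dec D R s \<in> Bas D R m" using basis_dec_in_Bas[OF w(4)] .
  obtain x' y' a' where d: "basis_dec D R s = (x', y', a')" by (cases "basis_dec D R s") auto
  have d': "x' \<ge> 1" "x' \<le> D" "y' < R" "a' < m" using ds d by (auto simp: mem_Bas)
  have sw: "swap_basis D R m P b = (x', y', a' + m * (lo + P * (basis_enc D R (x, y, a) + ?N * hi)))"
    using swap_basis_digits[OF w(2,3,4)] bb w(1) d by simp
  show "swap_basis D R m P b \<in> Bas D R (m * (P * (D * R * m) * T))"
    unfolding sw using digits_less[OF d'(4) w(3) e w(5)] d' by (simp add: mem_Bas)
  have "swap_basis D R m P (swap_basis D R m P b) = (fst (basis_dec D R (basis_enc D R (x, y, a))), fst (snd (basis_dec D R (basis_enc D R (x, y, a)))),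
        snd (snd (basis_dec D R (basis_enc D R (x, y, a)))) + m * (lo + P * (basis_enc D R (x', y', a') + ?N * hi)))"
    unfolding sw by (rule swap_basis_digits[OF d'(4) w(3) e])
  also have "\<dots> = b"
    using basis_dec_enc[OF xyA] d basis_enc_dec[OF w(4)] bb w(1) by simp
  finally show "swap_basis D R m P (swap_basis D R m P b) = b" .
qed

lemma block_state_swap_basis:
  assumes "a < m" "lo < P" "s < D * R * m" "R dvd P" "(x, y, a) \<in> Bas D R m"
  shows "block_state m R \<phi> \<Phi> (swap_basis D R m P (x, y, a + m * (lo + P * (s + (D * R * m) * hi))))
       = \<phi> (lo mod R) (basis_dec D R s) * \<Phi> (lo + P * (basis_enc D R (x, y, a) + (D * R * m) * hi))"
proof -
  let ?u = "lo + P * (basis_enc D R (x, y, a) + (D * R * m) * hi)"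
  obtain x' y' a' where d: "basis_dec D R s = (x', y', a')" by (cases "basis_dec D R s")
  have "a' < m" using basis_dec_in_Bas[OF assms(3)] d by (simp add: mem_Bas)
  note digits = digits_mod_div[OF this assms(2) basis_enc_less[OF assms(5)]]
  have "?u mod R = lo mod R"
    using mod_mod_cancel[OF assms(4), of ?u] digits(3) by simp
  then show ?thesis
    using swap_basis_digits[OF assms(1-3), of x y hi] d digits(1,2) by (simp add: block_state_def)
qed

lemma block_state_init_digits:
  assumes "a < m" "lo < P" "s < N" "R dvd P"
  shows "block_state m R (\<lambda>c. init_state)
           (\<lambda>u. if u < P * N then \<Phi> (u mod P) * \<phi> (u mod R) (basis_dec D R (u div P)) else 0)
           (x, y, a + m * (lo + P * (s + N * hi)))
       = (if (x, y, a) = (1, 0, 0) \<and> hi = 0 then \<Phi> lo * \<phi> (lo mod R) (basis_dec D R s) else 0)"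
proof -
  let ?u = "lo + P * (s + N * hi)"
  note digits = digits_mod_div[OF assms(1-3), of hi]
  have "?u mod R = lo mod R" using mod_mod_cancel[OF assms(4), of ?u] digits(3) by simp
  moreover have "?u < P * N \<longleftrightarrow> hi = 0"
  proof
    assume "?u < P * N"
    then have "P * (s + N * hi) < P * N" by linarith
    then show "hi = 0" by (cases hi) auto
  next
    assume "hi = 0"
    then have "?u < P * (s + 1)" using assms(2) by simp
    also have "\<dots> \<le> P * N" using assms(3) by (intro mult_le_mono2) simp
    finally show "?u < P * N" .
  qed
  ultimately show ?thesis using digits by (auto simp: block_state_def init_state_def)
qed

lemma apply_swap_block_state:
  assumes B: "B = Bas D R (m * (P * (D * R * m) * T))" and P: "P > 0" "R dvd P"
    and Phi0: "\<And>u. u \<ge> P \<Longrightarrow> \<Phi> u = 0"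
    and b: "b \<in> B"
  shows "apply_mat B (perm_mat (swap_basis D R m P)) (block_state m R \<phi> \<Phi>) b
       = block_state m R (\<lambda>c. init_state)
           (\<lambda>u. if u < P * (D * R * m) then \<Phi> (u mod P) * \<phi> (u mod R) (basis_dec D R (u div P)) else 0) b"
proof -
  let ?N = "D * R * m"
  have inj: "inj_on (swap_basis D R m P) B"
    by (rule inj_on_inverseI[where g = "swap_basis D R m P"]) (use swap_basis_props(2) B P in blast)
  have sb: "swap_basis D R m P b \<in> B" using swap_basis_props(1) B P b by blast
  have lhs: "apply_mat B (perm_mat (swap_basis D R m P)) (block_state m R \<phi> \<Phi>) b
      = block_state m R \<phi> \<Phi> (swap_basis D R m P b)"
    by (rule apply_perm_mat[OF _ inj sb]) (use B swap_basis_props(2) P b in auto)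
  obtain x y w where bb: "b = (x, y, w)" by (cases b)
  obtain a lo s hi where w: "w = a + m * (lo + P * (s + ?N * hi))"
    "a < m" "lo < P" "s < ?N" "hi < T"
    using Bas_digitsE b B P bb by blast
  have xyA: "(x, y, a) \<in> Bas D R m" using b B bb w by (auto simp: mem_Bas)
  let ?e = "basis_enc D R (x, y, a)"
  note swapped = block_state_swap_basis[OF w(2-4) P(2) xyA, of \<phi> \<Phi> hi]
  note init = block_state_init_digits[OF w(2-4) P(2), of \<Phi> \<phi> D x y hi]
  show ?thesis
  proof (cases "(x, y, a) = (1, 0, 0) \<and> hi = 0")
    case True
    then have "?e = 0" using basis_enc_eq_0_iff[OF xyA] by simp
    then show ?thesis using lhs swapped init True bb w(1) by simp
  next
    case False
    have "?N > 0" using xyA by (auto simp: mem_Bas)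
    then have "?e + ?N * hi \<noteq> 0" using False basis_enc_eq_0_iff[OF xyA] by auto
    then have "\<Phi> (lo + P * (?e + ?N * hi)) = 0" by (intro Phi0) (cases "?e + ?N * hi", auto)
    then show ?thesis using lhs swapped init False bb w(1) by auto
  qed
qed

definition householder :: "basis set \<Rightarrow> (basis \<Rightarrow> real) \<Rightarrow> qmat" where
  "householder B v = (\<lambda>i j. complex_of_real ((if i = j then 1 else 0) - 2 * v i * v j / (\<Sum>b\<in>B. (v b)\<^sup>2)))"

lemma unitary_householder:
  assumes "finite B" "(\<Sum>b\<in>B. (v b)\<^sup>2) \<noteq> 0"
  shows "unitary_on B (householder B v)"
  unfolding unitary_on_def
proof (intro ballI)
  fix i j assume ij: "i \<in> B" "j \<in> B"
  let ?n = "\<Sum>b\<in>B. (v b)\<^sup>2"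
  have "(\<Sum>k\<in>B. cnj (householder B v k i) * householder B v k j)
     = complex_of_real (\<Sum>k\<in>B. ((if k = i then 1 else 0) - 2 * v k * v i / ?n) * ((if k = j then 1 else 0) - 2 * v k * v j / ?n))"
    by (simp add: householder_def of_real_sum)
  also have "(\<Sum>k\<in>B. ((if k = i then 1 else 0) - 2 * v k * v i / ?n) * ((if k = j then 1 else 0) - 2 * v k * v j / ?n))
     = (\<Sum>k\<in>B. (if k = i \<and> k = j then 1 else 0)) - (\<Sum>k\<in>B. (if k = i then 2 * v k * v j / ?n else 0))
       - (\<Sum>k\<in>B. (if k = j then 2 * v k * v i / ?n else 0)) + (\<Sum>k\<in>B. 4 * v i * v j / ?n ^ 2 * (v k)\<^sup>2)"
  proof -
    have pt: "((if k = i then 1 else 0) - 2 * v k * v i / ?n) * ((if k = j then 1 else 0) - 2 * v k * v j / ?n)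
      = (if k = i \<and> k = j then 1 else 0) - (if k = i then 2 * v k * v j / ?n else 0)
       - (if k = j then 2 * v k * v i / ?n else 0) + 4 * v i * v j / ?n ^ 2 * (v k)\<^sup>2" for k
      by (cases "k = i"; cases "k = j") (simp_all add: algebra_simps power2_eq_square)
    show ?thesis unfolding pt by (simp add: sum_subtractf sum.distrib)
  qed
  also have "\<dots> = (if i = j then 1 else 0) - 2 * v i * v j / ?n - 2 * v j * v i / ?n + 4 * v i * v j / ?n ^ 2 * ?n"
  proof -
    have "(\<Sum>k\<in>B. 4 * v i * v j / ?n ^ 2 * (v k)\<^sup>2) = 4 * v i * v j / ?n ^ 2 * ?n"
      by (simp add: sum_distrib_left)
    moreover have "(\<Sum>k\<in>B. (if k = i \<and> k = j then 1 else 0)) = (if i = j then (1::real) else 0)"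
      using ij assms(1) by (cases "i = j") (simp_all add: sum.neutral)
    ultimately show ?thesis using ij assms(1) by simp
  qed
  also have "\<dots> = (if i = j then 1 else 0)"
    using assms(2) by (simp add: power2_eq_square field_simps)
  finally show "(\<Sum>k\<in>B. cnj (householder B v k i) * householder B v k j) = (if i = j then 1 else 0)" by simp
qed

definition shift_list :: "nat \<Rightarrow> (nat \<Rightarrow> nat) \<Rightarrow> nat set \<Rightarrow> nat \<Rightarrow> nat \<Rightarrow> nat" where
  "shift_list R L S c x = (if x \<in> S then (L x + c - 1) mod R + 1 else L x)"

lemma shift_list_mod:
  assumes "L x \<ge> 1"
  shows "shift_list R L S c x mod R = (L x + (if x \<in> S then c else 0)) mod R"
proof (cases "x \<in> S")
  case True
  have "((L x + c - 1) mod R + 1) mod R = (L x + c - 1 + 1) mod R"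
    by (metis mod_add_left_eq)
  also have "L x + c - 1 + 1 = L x + c" using assms by simp
  finally show ?thesis using True by (simp add: shift_list_def)
next
  case False
  then show ?thesis by (simp add: shift_list_def)
qed

lemma run_ops_snoc:
  "run_ops BB Orc (Us @ [X]) v = apply_mat BB X (apply_mat BB Orc (run_ops BB Orc Us v))"
  by (induction Us arbitrary: v) auto

lemma run_ops_append:
  "run_ops BB Orc (Us @ Vs) v = run_ops BB Orc Vs (run_ops BB Orc Us v)"
  by (induction Us arbitrary: v) auto

text \<open>A list \<open>rs\<close> of runs \<open>(A\<^sub>j, S\<^sub>j)\<close> is combined into one algorithm whose workspace value is
  \<open>a + m * u\<close>: \<open>a < m\<close> is the workspace of the current run, \<open>u mod R\<close> holds the shift \<open>c\<close>, and
  digit \<open>j\<close> of \<open>u div R\<close> in base \<open>N\<close> receives the final basis state of run \<open>j\<close> (\<open>store_mat j\<close>).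
  Every oracle call of run \<open>j\<close> is followed by \<open>shift_reg S\<^sub>j\<close>, which adds \<open>c\<close> to the answers at
  positions in \<open>S\<^sub>j\<close>; run \<open>j\<close> therefore sees the list \<open>shift_list R L S\<^sub>j c\<close>.\<close>

locale run_list =
  fixes D R m :: nat and rs :: "('o qalg \<times> nat set) list"
  assumes D0: "D > 0" and R2: "R \<ge> 2" and m0: "m > 0"
    and valid: "\<And>A S. (A, S) \<in> set rs \<Longrightarrow> valid_qalg D R A \<and> ws A = m \<and> num_queries A \<ge> 1"
    and rs_ne: "rs \<noteq> []"
begin

definition "N = D * R * m"

definition "k = length rs"

definition "K = R * N ^ k"

definition "M = m * K"

definition "B = Bas D R M"

definition "B_run = Bas D R m"

definition shift_reg :: "nat set \<Rightarrow> qmat" where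
  "shift_reg S = add_oracle R (\<lambda>w x. if x \<in> S then (w div m) mod R else 0)"

definition store_mat :: "nat \<Rightarrow> qmat" where
  "store_mat j = perm_mat (swap_basis D R m (R * N ^ j))"

fun post_mat :: "nat \<Rightarrow> ('o qalg \<times> nat set) list \<Rightarrow> qmat" where
  "post_mat j [] = store_mat j"
| "post_mat j (p # _) = mat_mult B (lift_mat m (hd (ops (fst p)))) (store_mat j)"

fun build_ops :: "nat \<Rightarrow> ('o qalg \<times> nat set) list \<Rightarrow> qmat list" where
  "build_ops j [] = []"
| "build_ops j (p # rest) =
     map (\<lambda>U. mat_mult B (lift_mat m U) (shift_reg (snd p))) (butlast (tl (ops (fst p))))
     @ [mat_mult B (post_mat j rest) (mat_mult B (lift_mat m (last (tl (ops (fst p))))) (shift_reg (snd p)))]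
     @ build_ops (Suc j) rest"

definition uniform_vec :: "basis \<Rightarrow> real" where
  "uniform_vec b = (case b of (x, y, w) \<Rightarrow> if x = 1 \<and> y = 0 \<and> w mod m = 0 \<and> w div m < R then 1 / sqrt R else 0)"

definition reflect_axis :: "basis \<Rightarrow> real" where
  "reflect_axis b = (if b = (1, 0, 0) then 1 else 0) - uniform_vec b"

text \<open>The reflection \<open>prepare\<close> maps the initial state to the uniform superposition over the shifts.\<close>

definition prepare :: qmat where "prepare = householder B reflect_axis"

definition comb_ops :: "qmat list" where
  "comb_ops = mat_mult B (lift_mat m (hd (ops (fst (rs ! 0))))) prepare # build_ops 0 rs"

definition stored :: "nat \<Rightarrow> nat \<Rightarrow> basis" where
  "stored j u = basis_dec D R ((u div (R * N ^ j)) mod N)"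

definition comb_out :: "((nat \<Rightarrow> basis) \<Rightarrow> 'b) \<Rightarrow> basis \<Rightarrow> 'b" where
  "comb_out G b = (case b of (x, y, w) \<Rightarrow> G (\<lambda>j. stored j (w div m)))"

definition comb_alg :: "((nat \<Rightarrow> basis) \<Rightarrow> 'b) \<Rightarrow> 'b qalg" where
  "comb_alg G = \<lparr>ws = M, ops = comb_ops, out = comb_out G\<rparr>"

lemma R0: "R > 0" using R2 by simp

lemma N0: "N > 0" using D0 R0 m0 by (simp add: N_def)

lemma B_eq: "B = Bas D R (m * K)" by (simp add: B_def M_def)

lemma M_split: "j < k \<Longrightarrow> M = m * (R * N ^ j * N * N ^ (k - j - 1))"
proof -
  assume "j < k"
  then have "N ^ k = N ^ (j + 1 + (k - j - 1))" by simp
  also have "\<dots> = N ^ j * N * N ^ (k - j - 1)" by (simp add: power_add)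
  finally have "N ^ k = N ^ j * N * N ^ (k - j - 1)" .
  then show ?thesis by (simp add: M_def K_def mult.assoc)
qed

lemma finite_B: "finite B" by (simp add: B_def)

lemma ws_nth_rs: "j < k \<Longrightarrow> ws (fst (rs ! j)) = m"
  using valid[of "fst (rs ! j)" "snd (rs ! j)"] by (simp add: k_def)

lemma tl_ops_nonempty: "p \<in> set rs \<Longrightarrow> tl (ops (fst p)) \<noteq> []"
  using valid[of "fst p" "snd p"] by (cases "ops (fst p)") (auto simp: num_queries_def)

lemma init_basis_in_B: "(1, 0, 0) \<in> B"
proof -
  have "K > 0" using R0 N0 by (simp add: K_def)
  then have "M > 0" using m0 by (simp add: M_def)
  then show ?thesis using D0 R0 by (simp add: B_def mem_Bas)
qed

lemma K_ge_R: "R \<le> K"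
proof -
  have "N ^ k \<ge> 1" using N0 by simp
  then show ?thesis unfolding K_def by (metis mult_le_mono2 mult.right_neutral)
qed

lemma apply_lift_mat_B:
  assumes "b \<in> B"
  shows "apply_mat B (lift_mat m U) (block_state m R \<psi> \<Phi>) b = block_state m R (\<lambda>c. apply_mat B_run U (\<psi> c)) \<Phi> b"
proof -
  obtain x' y' w' where bb: "b = (x', y', w')" by (cases b) auto
  show ?thesis unfolding B_eq B_run_def bb by (rule apply_lift_mat_block_state[OF m0 assms[unfolded B_eq bb]])
qed

lemma comb_out_lift_basis:
  assumes "b \<in> B_run"
  shows "comb_out G (lift_basis m u b) = G (\<lambda>j. stored j u)"
proof -
  obtain x y a where bb: "b = (x, y, a)" by (cases b) auto
  have "a < m" using assms bb by (simp add: B_run_def mem_Bas)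
  then show ?thesis using bb by (simp add: comb_out_def lift_basis_def stored_def)
qed

lemma uniform_vec_lift_basis:
  assumes "b \<in> B_run"
  shows "uniform_vec (lift_basis m u b) = (if b = (1, 0, 0) \<and> u < R then 1 / sqrt R else 0)"
proof -
  obtain x y a where bb: "b = (x, y, a)" by (cases b) auto
  have "a < m" using assms bb by (simp add: B_run_def mem_Bas)
  then show ?thesis using bb by (simp add: uniform_vec_def lift_basis_def)
qed

lemma sum_uniform_vec_sq: "(\<Sum>b\<in>B. (uniform_vec b)\<^sup>2) = 1"
proof -
  have e0A: "(1, 0, 0) \<in> B_run" using D0 R0 m0 by (simp add: B_run_def mem_Bas)
  have "(\<Sum>b\<in>B. (uniform_vec b)\<^sup>2) = (\<Sum>u<K. \<Sum>b\<in>B_run. (uniform_vec (lift_basis m u b))\<^sup>2)"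
    unfolding B_eq B_run_def by (rule sum_Bas_mult[OF m0])
  also have "\<dots> = (\<Sum>u<K. if u < R then 1 / R else 0)"
  proof (intro sum.cong refl)
    fix u
    have "(\<Sum>b\<in>B_run. (uniform_vec (lift_basis m u b))\<^sup>2) = (\<Sum>b\<in>B_run. if b = (1, 0, 0) then (if u < R then 1 / R else 0) else 0)"
      by (intro sum.cong refl) (auto simp: uniform_vec_lift_basis power_divide R0)
    also have "\<dots> = (if u < R then 1 / R else 0)" using e0A by (simp add: B_run_def)
    finally show "(\<Sum>b\<in>B_run. (uniform_vec (lift_basis m u b))\<^sup>2) = (if u < R then 1 / R else 0)" .
  qed
  also have "\<dots> = (\<Sum>u<R. 1 / real R)"
  proof -
    have "{..<K} \<inter> {u. u < R} = {..<R}" using K_ge_R by auto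
    then show ?thesis by (simp add: sum.If_cases)
  qed
  also have "\<dots> = 1" using R0 by simp
  finally show ?thesis .
qed

lemma uniform_vec_init: "uniform_vec (1, 0, 0) = 1 / sqrt R"
  using R0 by (simp add: uniform_vec_def)

lemma sqrt_R_gt_1: "sqrt R > 1"
  using R2 by simp

lemma sum_reflect_axis_sq: "(\<Sum>b\<in>B. (reflect_axis b)\<^sup>2) = 2 - 2 / sqrt R"
proof -
  have "(\<Sum>b\<in>B. (reflect_axis b)\<^sup>2) = (\<Sum>b\<in>B. (if b = (1, 0, 0) then 1 - 2 * uniform_vec b else 0) + (uniform_vec b)\<^sup>2)"
    by (intro sum.cong refl) (simp add: reflect_axis_def power2_eq_square algebra_simps)
  also have "\<dots> = (1 - 2 * uniform_vec (1, 0, 0)) + 1"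
    using init_basis_in_B finite_B by (simp add: sum.distrib sum_uniform_vec_sq)
  finally show ?thesis unfolding uniform_vec_init by simp
qed

lemma unitary_shift_reg: "unitary_on B (shift_reg S)"
  unfolding shift_reg_def B_def by (rule unitary_add_oracle[OF R0])

lemma unitary_lift_run_op:
  assumes "p \<in> set rs" "U \<in> set (ops (fst p))"
  shows "unitary_on B (lift_mat m U)"
proof -
  have "(fst p, snd p) \<in> set rs" using assms by simp
  then have "valid_qalg D R (fst p)" "ws (fst p) = m" using valid by blast+
  then have "unitary_on (Bas D R m) U" using assms(2) by (auto simp: valid_qalg_def)
  then show ?thesis unfolding B_eq by (rule unitary_lift_mat[OF m0])
qed

lemma unitary_store_mat:
  assumes j: "j < k"
  shows "unitary_on B (store_mat j)"
proof -
  have BB: "B = Bas D R (m * (R * N ^ j * (D * R * m) * N ^ (k - j - 1)))"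
    using M_split[OF j] by (simp add: B_def N_def)
  have P: "R * N ^ j > 0" using R0 N0 by auto
  have inj: "inj_on (swap_basis D R m (R * N ^ j)) B"
    by (rule inj_on_inverseI[where g = "swap_basis D R m (R * N ^ j)"]) (use swap_basis_props(2) BB P in blast)
  show ?thesis unfolding store_mat_def
    by (rule unitary_perm_mat[OF finite_B _ inj]) (use swap_basis_props(1) BB P in blast)
qed

lemma unitary_prepare: "unitary_on B prepare"
proof -
  have "2 - 2 / sqrt R \<noteq> 0" using sqrt_R_gt_1 by (simp add: field_simps)
  then show ?thesis unfolding prepare_def by (rule unitary_householder[OF finite_B, of reflect_axis, unfolded sum_reflect_axis_sq])
qed

lemma drop_rs_Cons:
  assumes "p # rest = drop j rs"
  shows "j < k \<and> p = rs ! j \<and> rest = drop (Suc j) rs"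
proof -
  have "j < length rs" using assms by (cases "j < length rs") auto
  then have "drop j rs = rs ! j # drop (Suc j) rs" by (rule Cons_nth_drop_Suc[symmetric])
  then show ?thesis using assms \<open>j < length rs\<close> by (simp add: k_def)
qed

lemma unitary_lift_hd:
  assumes "p \<in> set rs"
  shows "unitary_on B (lift_mat m (hd (ops (fst p))))"
  using assms tl_ops_nonempty[OF assms] by (intro unitary_lift_run_op) (auto intro: hd_in_set)

lemma unitary_post_mat:
  assumes "j < k" "rest = drop (Suc j) rs"
  shows "unitary_on B (post_mat j rest)"
proof (cases rest)
  case Nil
  then show ?thesis using unitary_store_mat[OF assms(1)] by simp
next
  case (Cons p rest')
  then have "Suc j < k" "p = rs ! Suc j" using assms(2) drop_rs_Cons[of p rest' "Suc j"] by simp_all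
  then have "p \<in> set rs" by (simp add: k_def)
  then show ?thesis
    using Cons unitary_mat_mult[OF finite_B unitary_lift_hd unitary_store_mat[OF assms(1)]] by simp
qed

lemma unitary_build_ops:
  "rest = drop j rs \<Longrightarrow> U \<in> set (build_ops j rest) \<Longrightarrow> unitary_on B U"
proof (induction rest arbitrary: j)
  case Nil
  then show ?case by simp
next
  case (Cons p rest)
  have j: "j < k" and p: "p = rs ! j" and rest: "rest = drop (Suc j) rs"
    using drop_rs_Cons[OF Cons.prems(1)] by auto
  have pin: "p \<in> set rs" using p j by (simp add: k_def)
  have run_op: "unitary_on B (mat_mult B (lift_mat m U') (shift_reg (snd p)))" if "U' \<in> set (tl (ops (fst p)))" for U'
    using that unitary_mat_mult[OF finite_B unitary_lift_run_op[OF pin] unitary_shift_reg]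
    by (cases "ops (fst p)") auto
  from Cons.prems(2) consider
      (inner) U' where "U' \<in> set (butlast (tl (ops (fst p))))" "U = mat_mult B (lift_mat m U') (shift_reg (snd p))"
    | (last) "U = mat_mult B (post_mat j rest) (mat_mult B (lift_mat m (last (tl (ops (fst p))))) (shift_reg (snd p)))"
    | (later) "U \<in> set (build_ops (Suc j) rest)"
    by auto
  then show ?case
  proof cases
    case inner
    have "U' \<in> set (tl (ops (fst p)))" using inner(1) by (rule in_set_butlastD)
    then show ?thesis using run_op inner(2) by simp
  next
    case last
    have "last (tl (ops (fst p))) \<in> set (tl (ops (fst p)))" by (rule last_in_set[OF tl_ops_nonempty[OF pin]])
    then show ?thesis using unitary_mat_mult[OF finite_B unitary_post_mat[OF j rest] run_op] last by simp
  next
    case later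
    then show ?thesis by (rule Cons.IH[OF rest])
  qed
qed

lemma valid_comb_alg: "valid_qalg D R (comb_alg G)"
proof -
  have "M \<ge> 1" using init_basis_in_B by (simp add: B_def mem_Bas)
  moreover have "unitary_on (Bas D R M) U" if "U \<in> set comb_ops" for U
  proof -
    have r0: "rs ! 0 \<in> set rs" using rs_ne by simp
    show ?thesis using that unitary_mat_mult[OF finite_B unitary_lift_hd[OF r0] unitary_prepare] unitary_build_ops[of rs 0]
      by (auto simp: comb_ops_def B_def)
  qed
  ultimately show ?thesis by (simp add: valid_qalg_def comb_alg_def comb_ops_def)
qed

lemma length_build_ops:
  "set rest \<subseteq> set rs \<Longrightarrow> length (build_ops j rest) = sum_list (map (\<lambda>p. num_queries (fst p)) rest)"
proof (induction rest arbitrary: j)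
  case Nil
  then show ?case by simp
next
  case (Cons p rest')
  have "tl (ops (fst p)) \<noteq> []" using tl_ops_nonempty Cons.prems by simp
  then have "length (ops (fst p)) \<ge> 2" by (cases "ops (fst p)") (auto simp: Suc_le_eq)
  then have "length (butlast (tl (ops (fst p)))) + 1 = num_queries (fst p)"
    by (simp add: num_queries_def)
  then show ?case using Cons by simp
qed

lemma num_queries_comb_alg: "num_queries (comb_alg G) = sum_list (map (\<lambda>p. num_queries (fst p)) rs)"
  using length_build_ops[of rs 0] by (simp add: num_queries_def comb_alg_def comb_ops_def)

end

locale shifted_runs = run_list D R m rs
  for D R m :: nat and rs :: "('o qalg \<times> nat set) list" +
  fixes L :: "nat \<Rightarrow> nat"
  assumes Lpos: "\<And>x. x \<in> {1..D} \<Longrightarrow> L x \<ge> 1"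
begin

definition run_state :: "nat \<Rightarrow> nat \<Rightarrow> qvec" where
  "run_state j c = final_state D R (shift_list R L (snd (rs ! j)) c) (fst (rs ! j))"

fun reg_amp :: "nat \<Rightarrow> nat \<Rightarrow> complex" where
  "reg_amp 0 u = (if u < R then complex_of_real (1 / sqrt R) else 0)"
| "reg_amp (Suc j) u = (if u < R * N ^ j * N then reg_amp j (u mod (R * N ^ j)) * run_state j (u mod R) (basis_dec D R (u div (R * N ^ j))) else 0)"

definition run_prob :: "(nat \<Rightarrow> basis \<Rightarrow> bool) \<Rightarrow> nat \<Rightarrow> nat \<Rightarrow> real" where
  "run_prob Q i c = (\<Sum>b\<in>B_run. if Q i b then (cmod (run_state i c b))\<^sup>2 else 0)"

lemma reg_amp_eq_0: "u \<ge> R * N ^ j \<Longrightarrow> reg_amp j u = 0"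
  by (cases j) (auto simp: mult_ac)

lemma apply_shifted_oracle_block_state:
  assumes v: "\<And>b. b \<in> B \<Longrightarrow> v b = block_state m R \<psi> \<Phi> b" and b: "b \<in> B"
  shows "apply_mat B (shift_reg S) (apply_mat B (oracle_mat R L) v) b
    = block_state m R (\<lambda>c. apply_mat B_run (oracle_mat R (shift_list R L S c)) (\<psi> c)) \<Phi> b"
proof -
  let ?H = "\<lambda>c x. L x + (if x \<in> S then c else 0)"
  obtain x' y' w' where bb: "b = (x', y', w')" by (cases b)
  have "apply_mat B (shift_reg S) (apply_mat B (oracle_mat R L) v) b
      = apply_mat B (add_oracle R (\<lambda>w x. ?H ((w div m) mod R) x)) v b"
    unfolding shift_reg_def oracle_mat_eq_add_oracle B_def using apply_add_oracle_twice[OF R0 b[unfolded B_def]]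
    by (simp add: if_distrib cong: if_cong)
  also have "\<dots> = apply_mat B (add_oracle R (\<lambda>w x. ?H ((w div m) mod R) x)) (block_state m R \<psi> \<Phi>) b"
    by (simp only: apply_mat_cong[OF v])
  also have "\<dots> = block_state m R (\<lambda>c. apply_mat B_run (add_oracle R (\<lambda>w x. ?H c x)) (\<psi> c)) \<Phi> b"
    unfolding B_eq B_run_def bb by (rule apply_add_oracle_block_state[OF m0 R0 b[unfolded B_eq bb]])
  also have "\<dots> = block_state m R (\<lambda>c. apply_mat B_run (oracle_mat R (shift_list R L S c)) (\<psi> c)) \<Phi> b"
  proof -
    have inA: "(x', y', w' mod m) \<in> Bas D R m" using b bb m0 by (auto simp: B_eq mem_Bas)
    then have xD: "x' \<in> {1..D}" by (simp add: mem_Bas)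
    have "unshift R (?H c x') y'' = unshift R (shift_list R L S c x') y''" for c y''
      using unshift_mod[of R "?H c x'"] unshift_mod[of R "shift_list R L S c x'"]
        shift_list_mod[where L = L, OF Lpos[OF xD]] by simp
    then have "apply_mat B_run (add_oracle R (\<lambda>w x. ?H c x)) (\<psi> c) (x', y', w' mod m)
        = apply_mat B_run (oracle_mat R (shift_list R L S c)) (\<psi> c) (x', y', w' mod m)" for c
      unfolding B_run_def oracle_mat_eq_add_oracle apply_add_oracle[OF R0 inA] by simp
    then show ?thesis by (simp add: block_state_def bb)
  qed
  finally show ?thesis .
qed

lemma step_block_state:
  assumes v: "\<And>b. b \<in> B \<Longrightarrow> v b = block_state m R \<psi> \<Phi> b" and b: "b \<in> B"
  shows "apply_mat B (mat_mult B (lift_mat m U) (shift_reg S)) (apply_mat B (oracle_mat R L) v) b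
    = block_state m R (\<lambda>c. apply_mat B_run U (apply_mat B_run (oracle_mat R (shift_list R L S c)) (\<psi> c))) \<Phi> b"
proof -
  have "apply_mat B (mat_mult B (lift_mat m U) (shift_reg S)) (apply_mat B (oracle_mat R L) v) b
      = apply_mat B (lift_mat m U) (apply_mat B (shift_reg S) (apply_mat B (oracle_mat R L) v)) b"
    by (simp add: apply_mat_mult B_def)
  also have "\<dots> = apply_mat B (lift_mat m U)
      (block_state m R (\<lambda>c. apply_mat B_run (oracle_mat R (shift_list R L S c)) (\<psi> c)) \<Phi>) b"
    by (simp only: apply_mat_cong[OF apply_shifted_oracle_block_state[OF v]])
  also have "\<dots> = block_state m R (\<lambda>c. apply_mat B_run U (apply_mat B_run (oracle_mat R (shift_list R L S c)) (\<psi> c))) \<Phi> b"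
    by (rule apply_lift_mat_B[OF b])
  finally show ?thesis .
qed

lemma run_ops_block_state:
  "(\<And>b. b \<in> B \<Longrightarrow> v b = block_state m R \<psi> \<Phi> b) \<Longrightarrow> b \<in> B \<Longrightarrow>
   run_ops B (oracle_mat R L) (map (\<lambda>U. mat_mult B (lift_mat m U) (shift_reg S)) Us) v b
   = block_state m R (\<lambda>c. run_ops B_run (oracle_mat R (shift_list R L S c)) Us (\<psi> c)) \<Phi> b"
proof (induction Us arbitrary: v \<psi> b)
  case Nil
  then show ?case by simp
next
  case (Cons U Us)
  show ?case
    using Cons.IH[OF step_block_state[OF Cons.prems(1)] Cons.prems(2)] by simp
qed

lemma run_state_unfold:
  assumes "j < k"
  shows "run_state j c = apply_mat B_run (last (tl (ops (fst (rs ! j)))))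
     (apply_mat B_run (oracle_mat R (shift_list R L (snd (rs ! j)) c))
       (run_ops B_run (oracle_mat R (shift_list R L (snd (rs ! j)) c)) (butlast (tl (ops (fst (rs ! j)))))
          (apply_mat B_run (hd (ops (fst (rs ! j)))) init_state)))"
proof -
  let ?T = "tl (ops (fst (rs ! j)))"
  have e: "butlast ?T @ [last ?T] = ?T"
    using tl_ops_nonempty[OF nth_mem] assms by (simp add: k_def)
  have "run_ops B_run O' ?T v = run_ops B_run O' (butlast ?T @ [last ?T]) v" for O' v
    by (simp only: e)
  then show ?thesis
    unfolding run_state_def final_state_def Let_def ws_nth_rs[OF assms] B_run_def
    by (simp only: run_ops_snoc)
qed

lemma run_ops_one_run:
  assumes j: "j < k"
    and v: "\<And>b. b \<in> B \<Longrightarrow> v b = block_state m R (\<lambda>c. apply_mat B_run (hd (ops (fst (rs ! j)))) init_state) (reg_amp j) b"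
    and b: "b \<in> B"
  shows "run_ops B (oracle_mat R L)
     (map (\<lambda>U. mat_mult B (lift_mat m U) (shift_reg (snd (rs ! j)))) (butlast (tl (ops (fst (rs ! j)))))
      @ [mat_mult B P (mat_mult B (lift_mat m (last (tl (ops (fst (rs ! j)))))) (shift_reg (snd (rs ! j))))]) v b
   = apply_mat B P (block_state m R (run_state j) (reg_amp j)) b"
proof -
  let ?A = "fst (rs ! j)" and ?S = "snd (rs ! j)"
  let ?v' = "run_ops B (oracle_mat R L) (map (\<lambda>U. mat_mult B (lift_mat m U) (shift_reg ?S)) (butlast (tl (ops ?A)))) v"
  have v': "\<And>b. b \<in> B \<Longrightarrow> ?v' b = block_state m R (\<lambda>c. run_ops B_run (oracle_mat R (shift_list R L ?S c)) (butlast (tl (ops ?A)))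
        (apply_mat B_run (hd (ops ?A)) init_state)) (reg_amp j) b"
    by (rule run_ops_block_state[OF v])
  have st: "\<And>b. b \<in> B \<Longrightarrow> apply_mat B (mat_mult B (lift_mat m (last (tl (ops ?A)))) (shift_reg ?S)) (apply_mat B (oracle_mat R L) ?v') b
      = block_state m R (run_state j) (reg_amp j) b"
  proof -
    have "run_state j = (\<lambda>c. apply_mat B_run (last (tl (ops ?A)))
     (apply_mat B_run (oracle_mat R (shift_list R L ?S c))
       (run_ops B_run (oracle_mat R (shift_list R L ?S c)) (butlast (tl (ops ?A)))
          (apply_mat B_run (hd (ops ?A)) init_state))))"
      by (rule ext, rule run_state_unfold[OF j])
    then show "\<And>b. b \<in> B \<Longrightarrow> apply_mat B (mat_mult B (lift_mat m (last (tl (ops ?A)))) (shift_reg ?S)) (apply_mat B (oracle_mat R L) ?v') b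
      = block_state m R (run_state j) (reg_amp j) b"
      using step_block_state[OF v'] by simp
  qed
  show ?thesis
    unfolding run_ops_snoc apply_mat_mult[OF finite_Bas[of D R M, folded B_def], of P]
    by (simp only: apply_mat_cong[OF st])
qed

lemma apply_store_mat:
  assumes j: "j < k" and b: "b \<in> B"
  shows "apply_mat B (store_mat j) (block_state m R (run_state j) (reg_amp j)) b = block_state m R (\<lambda>c. init_state) (reg_amp (Suc j)) b"
proof -
  have BB: "B = Bas D R (m * (R * N ^ j * (D * R * m) * N ^ (k - j - 1)))"
    using M_split[OF j] by (simp add: B_def N_def)
  have P: "R * N ^ j > 0" "R dvd R * N ^ j" using R0 N0 by auto
  have "apply_mat B (store_mat j) (block_state m R (run_state j) (reg_amp j)) b
      = block_state m R (\<lambda>c. init_state)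
           (\<lambda>u. if u < R * N ^ j * (D * R * m) then reg_amp j (u mod (R * N ^ j)) * run_state j (u mod R) (basis_dec D R (u div (R * N ^ j))) else 0) b"
    unfolding store_mat_def by (rule apply_swap_block_state[OF BB P reg_amp_eq_0 b])
  also have "(\<lambda>u. if u < R * N ^ j * (D * R * m) then reg_amp j (u mod (R * N ^ j)) * run_state j (u mod R) (basis_dec D R (u div (R * N ^ j))) else 0)
      = reg_amp (Suc j)"
    by (rule ext) (simp add: N_def)
  finally show ?thesis .
qed

lemma run_ops_build_ops:
  "rest \<noteq> [] \<Longrightarrow> j + length rest = k \<Longrightarrow> rest = drop j rs \<Longrightarrow>
   (\<And>b. b \<in> B \<Longrightarrow> v b = block_state m R (\<lambda>c. apply_mat B_run (hd (ops (fst (rs ! j)))) init_state) (reg_amp j) b) \<Longrightarrow>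
   b \<in> B \<Longrightarrow> run_ops B (oracle_mat R L) (build_ops j rest) v b = block_state m R (\<lambda>c. init_state) (reg_amp k) b"
proof (induction rest arbitrary: j v b)
  case Nil
  then show ?case by simp
next
  case (Cons p rest')
  have j: "j < k" and p: "p = rs ! j" and rest': "rest' = drop (Suc j) rs"
    using drop_rs_Cons[OF Cons.prems(3)] by auto
  let ?v1 = "run_ops B (oracle_mat R L)
     (map (\<lambda>U. mat_mult B (lift_mat m U) (shift_reg (snd (rs ! j)))) (butlast (tl (ops (fst (rs ! j)))))
      @ [mat_mult B (post_mat j rest') (mat_mult B (lift_mat m (last (tl (ops (fst (rs ! j)))))) (shift_reg (snd (rs ! j))))]) v"
  have v1: "?v1 b' = apply_mat B (post_mat j rest') (block_state m R (run_state j) (reg_amp j)) b'" if "b' \<in> B" for b'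
    by (rule run_ops_one_run[OF j Cons.prems(4) that])
  have eq: "run_ops B (oracle_mat R L) (build_ops j (p # rest')) v = run_ops B (oracle_mat R L) (build_ops (Suc j) rest') ?v1"
    unfolding p by (simp add: run_ops_append)
  show ?case
  proof (cases rest')
    case Nil
    have "Suc j = k" using Cons.prems(2) Nil by simp
    then show ?thesis unfolding eq using Nil v1[OF Cons.prems(5)] apply_store_mat[OF j Cons.prems(5)] by simp
  next
    case (Cons p' rest'')
    have p': "p' = rs ! Suc j" using drop_rs_Cons[of p' rest'' "Suc j"] rest' Cons by simp
    have v1': "?v1 b' = block_state m R (\<lambda>c. apply_mat B_run (hd (ops (fst (rs ! Suc j)))) init_state) (reg_amp (Suc j)) b'"
      if b': "b' \<in> B" for b'
    proof -
      have "?v1 b' = apply_mat B (lift_mat m (hd (ops (fst p')))) (apply_mat B (store_mat j) (block_state m R (run_state j) (reg_amp j))) b'"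
        using v1[OF b'] Cons by (simp add: apply_mat_mult[OF finite_B])
      also have "\<dots> = apply_mat B (lift_mat m (hd (ops (fst p')))) (block_state m R (\<lambda>c. init_state) (reg_amp (Suc j))) b'"
        by (simp only: apply_mat_cong[OF apply_store_mat[OF j]])
      also have "\<dots> = block_state m R (\<lambda>c. apply_mat B_run (hd (ops (fst p'))) init_state) (reg_amp (Suc j)) b'"
        by (rule apply_lift_mat_B[OF b'])
      finally show ?thesis using p' by simp
    qed
    show ?thesis unfolding eq
      by (rule Cons.IH[OF _ _ rest' v1' Cons.prems(5)]) (use Cons.prems(2) \<open>rest' = p' # rest''\<close> in auto)
  qed
qed

lemma apply_prepare_init:
  assumes "b \<in> B"
  shows "apply_mat B prepare init_state b = block_state m R (\<lambda>c. init_state) (reg_amp 0) b"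
proof -
  let ?n = "\<Sum>b\<in>B. (reflect_axis b)\<^sup>2"
  have n: "?n = 2 * (1 - 1 / sqrt R)" using sum_reflect_axis_sq by simp
  have n0: "1 - 1 / sqrt R \<noteq> 0" using sqrt_R_gt_1 by simp
  have ve0: "reflect_axis (1, 0, 0) = 1 - 1 / sqrt R" unfolding reflect_axis_def uniform_vec_init by simp
  have "apply_mat B prepare init_state b = householder B reflect_axis b (1, 0, 0)"
    unfolding apply_mat_def init_state_def prepare_def using init_basis_in_B finite_B
    by (simp add: if_distrib cong: if_cong)
  also have "\<dots> = complex_of_real ((if b = (1, 0, 0) then 1 else 0) - reflect_axis b)"
  proof -
    have gen: "\<And>a t. t \<noteq> (0::real) \<Longrightarrow> 2 * a * t / (2 * t) = a" by simp
    have key: "2 * reflect_axis b * (1 - 1 / sqrt R) / (2 * (1 - 1 / sqrt R)) = reflect_axis b" by (rule gen[OF n0])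
    show ?thesis unfolding householder_def n ve0 key ..
  qed
  also have "\<dots> = complex_of_real (uniform_vec b)" by (simp add: reflect_axis_def)
  also have "\<dots> = block_state m R (\<lambda>c. init_state) (reg_amp 0) b"
  proof -
    obtain x y w where bb: "b = (x, y, w)" by (cases b) auto
    show ?thesis by (simp add: bb uniform_vec_def block_state_def init_state_def)
  qed
  finally show ?thesis .
qed

lemma final_state_comb_alg:
  assumes "b \<in> B"
  shows "final_state D R L (comb_alg G) b = block_state m R (\<lambda>c. init_state) (reg_amp k) b"
proof -
  let ?v0 = "apply_mat B (mat_mult B (lift_mat m (hd (ops (fst (rs ! 0))))) prepare) init_state"
  have v0: "?v0 b' = block_state m R (\<lambda>c. apply_mat B_run (hd (ops (fst (rs ! 0)))) init_state) (reg_amp 0) b'"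
    if b': "b' \<in> B" for b'
  proof -
    have "?v0 b' = apply_mat B (lift_mat m (hd (ops (fst (rs ! 0))))) (apply_mat B prepare init_state) b'"
      by (simp add: apply_mat_mult[OF finite_B])
    also have "\<dots> = apply_mat B (lift_mat m (hd (ops (fst (rs ! 0))))) (block_state m R (\<lambda>c. init_state) (reg_amp 0)) b'"
      by (simp only: apply_mat_cong[OF apply_prepare_init])
    also have "\<dots> = block_state m R (\<lambda>c. apply_mat B_run (hd (ops (fst (rs ! 0)))) init_state) (reg_amp 0) b'"
      by (rule apply_lift_mat_B[OF b'])
    finally show ?thesis .
  qed
  have "final_state D R L (comb_alg G) = run_ops B (oracle_mat R L) (build_ops 0 rs) ?v0"
    by (simp add: final_state_def comb_alg_def comb_ops_def B_def Let_def)
  then show ?thesis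
    using run_ops_build_ops[OF rs_ne _ _ v0 assms] by (simp add: k_def)
qed

lemma prob_out_comb_alg:
  "prob_out D R L (comb_alg G) P = (\<Sum>u<K. if P (G (\<lambda>j. stored j u)) then (cmod (reg_amp k u))\<^sup>2 else 0)"
proof -
  have e0A: "(1, 0, 0) \<in> B_run" using D0 R0 m0 by (simp add: B_run_def mem_Bas)
  have "prob_out D R L (comb_alg G) P = (\<Sum>b\<in>B. if P (comb_out G b) then (cmod (block_state m R (\<lambda>c. init_state) (reg_amp k) b))\<^sup>2 else 0)"
  proof -
    have ws: "ws (comb_alg G) = M" "out (comb_alg G) = comb_out G" by (simp_all add: comb_alg_def)
    show ?thesis unfolding prob_out_def ws B_def[symmetric] by (intro sum.cong refl) (simp add: final_state_comb_alg)
  qed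
  also have "\<dots> = (\<Sum>u<K. \<Sum>b\<in>B_run. if P (comb_out G (lift_basis m u b)) then (cmod (block_state m R (\<lambda>c. init_state) (reg_amp k) (lift_basis m u b)))\<^sup>2 else 0)"
    unfolding B_eq B_run_def by (rule sum_Bas_mult[OF m0])
  also have "\<dots> = (\<Sum>u<K. if P (G (\<lambda>j. stored j u)) then (cmod (reg_amp k u))\<^sup>2 else 0)"
  proof (intro sum.cong refl)
    fix u
    have "(\<Sum>b\<in>B_run. if P (comb_out G (lift_basis m u b)) then (cmod (block_state m R (\<lambda>c. init_state) (reg_amp k) (lift_basis m u b)))\<^sup>2 else 0)
        = (\<Sum>b\<in>B_run. if b = (1, 0, 0) then (if P (G (\<lambda>j. stored j u)) then (cmod (reg_amp k u))\<^sup>2 else 0) else 0)"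
      by (intro sum.cong refl) (auto simp: comb_out_lift_basis block_state_lift_basis[unfolded B_run_def[symmetric]] init_state_def B_run_def)
    also have "\<dots> = (if P (G (\<lambda>j. stored j u)) then (cmod (reg_amp k u))\<^sup>2 else 0)"
      using e0A by (simp add: B_run_def)
    finally show "(\<Sum>b\<in>B_run. if P (comb_out G (lift_basis m u b)) then (cmod (block_state m R (\<lambda>c. init_state) (reg_amp k) (lift_basis m u b)))\<^sup>2 else 0)
        = (if P (G (\<lambda>j. stored j u)) then (cmod (reg_amp k u))\<^sup>2 else 0)" .
  qed
  finally show ?thesis .
qed

lemma stored_split:
  assumes "u1 < R * N ^ j" "s < N"
  shows "i < j \<Longrightarrow> stored i (u1 + R * N ^ j * s) = stored i u1"
    and "stored j (u1 + R * N ^ j * s) = basis_dec D R s"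
    and "(u1 + R * N ^ j * s) mod R = u1 mod R"
    and "reg_amp (Suc j) (u1 + R * N ^ j * s) = reg_amp j u1 * run_state j (u1 mod R) (basis_dec D R s)"
proof -
  have P0: "R * N ^ j > 0" using R0 N0 by simp
  show "stored j (u1 + R * N ^ j * s) = basis_dec D R s"
    using assms P0 by (simp add: stored_def)
  show mR: "(u1 + R * N ^ j * s) mod R = u1 mod R"
    by (simp add: mult.assoc)
  {
    assume i: "i < j"
    have e: "R * N ^ j * s = R * N ^ i * (N * (N ^ (j - i - 1) * s))"
    proof -
      have "N ^ j = N ^ i * N * N ^ (j - i - 1)"
      proof -
        have "N ^ j = N ^ (i + 1 + (j - i - 1))" using i by simp
        also have "\<dots> = N ^ i * N * N ^ (j - i - 1)" by (simp add: power_add)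
        finally show ?thesis .
      qed
      then show ?thesis by (simp add: mult_ac)
    qed
    have "(u1 + R * N ^ j * s) div (R * N ^ i) = u1 div (R * N ^ i) + N * (N ^ (j - i - 1) * s)"
      unfolding e using R0 N0 by simp
    then show "stored i (u1 + R * N ^ j * s) = stored i u1"
      by (simp add: stored_def)
  }
  have lt: "u1 + R * N ^ j * s < R * N ^ j * N"
  proof -
    have "u1 + R * N ^ j * s < R * N ^ j * (s + 1)" using assms by simp
    also have "\<dots> \<le> R * N ^ j * N" using assms by (intro mult_le_mono2) simp
    finally show ?thesis .
  qed
  show "reg_amp (Suc j) (u1 + R * N ^ j * s) = reg_amp j u1 * run_state j (u1 mod R) (basis_dec D R s)"
    using lt assms P0 mR by simp
qed

lemma cmod_reg_amp_0_sq:
  assumes "u < R"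
  shows "(cmod (reg_amp 0 u))\<^sup>2 = 1 / R"
proof -
  have "cmod (reg_amp 0 u) = 1 / sqrt R" using assms by (simp only: reg_amp.simps if_True norm_of_real) simp
  then show ?thesis using R0 by (simp add: power_divide)
qed

text \<open>Given the shift \<open>c\<close>, the outcomes stored by the runs are independent.\<close>

lemma sum_amp_stored:
  assumes c: "c < R"
  shows "(\<Sum>u<R * N ^ j. if u mod R = c \<and> (\<forall>i<j. Q i (stored i u)) then (cmod (reg_amp j u))\<^sup>2 else 0)
       = (1 / R) * (\<Prod>i<j. run_prob Q i c)"
proof (induction j)
  case 0
  have "(\<Sum>u<R. if u mod R = c then (cmod (reg_amp 0 u))\<^sup>2 else 0) = (\<Sum>u<R. if u = c then 1 / R else 0)"
    by (intro sum.cong refl) (auto simp del: reg_amp.simps simp: cmod_reg_amp_0_sq)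
  also have "\<dots> = 1 / R" using c by simp
  finally show ?case by simp
next
  case (Suc j)
  let ?a = "R * N ^ j"
  have a0: "?a > 0" using R0 N0 by simp
  have "(\<Sum>u<R * N ^ Suc j. if u mod R = c \<and> (\<forall>i<Suc j. Q i (stored i u)) then (cmod (reg_amp (Suc j) u))\<^sup>2 else 0)
      = (\<Sum>u1<?a. \<Sum>s<N. if (u1 + ?a * s) mod R = c \<and> (\<forall>i<Suc j. Q i (stored i (u1 + ?a * s)))
            then (cmod (reg_amp (Suc j) (u1 + ?a * s)))\<^sup>2 else 0)"
  proof -
    have e: "R * N ^ Suc j = ?a * N" by (simp add: mult_ac)
    show ?thesis unfolding e by (rule sum_lessThan_mult[OF a0])
  qed
  also have "\<dots> = (\<Sum>u1<?a. \<Sum>s<N. (if u1 mod R = c \<and> (\<forall>i<j. Q i (stored i u1)) then (cmod (reg_amp j u1))\<^sup>2 else 0)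
            * (if Q j (basis_dec D R s) then (cmod (run_state j c (basis_dec D R s)))\<^sup>2 else 0))"
  proof (intro sum.cong refl)
    fix u1 s assume u1: "u1 \<in> {..<?a}" and s: "s \<in> {..<N}"
    have ss: "\<And>i. i < j \<Longrightarrow> stored i (u1 + ?a * s) = stored i u1" "stored j (u1 + ?a * s) = basis_dec D R s"
      "(u1 + ?a * s) mod R = u1 mod R" "reg_amp (Suc j) (u1 + ?a * s) = reg_amp j u1 * run_state j (u1 mod R) (basis_dec D R s)"
      using stored_split[of u1 j s] u1 s by auto
    have q: "(\<forall>i<Suc j. Q i (stored i (u1 + ?a * s))) \<longleftrightarrow> (\<forall>i<j. Q i (stored i u1)) \<and> Q j (basis_dec D R s)"
      using ss(1,2) less_Suc_eq by auto
    show "(if (u1 + ?a * s) mod R = c \<and> (\<forall>i<Suc j. Q i (stored i (u1 + ?a * s)))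
            then (cmod (reg_amp (Suc j) (u1 + ?a * s)))\<^sup>2 else 0)
        = (if u1 mod R = c \<and> (\<forall>i<j. Q i (stored i u1)) then (cmod (reg_amp j u1))\<^sup>2 else 0)
            * (if Q j (basis_dec D R s) then (cmod (run_state j c (basis_dec D R s)))\<^sup>2 else 0)"
      unfolding q ss(3,4) by (auto simp: norm_mult power_mult_distrib)
  qed
  also have "\<dots> = (\<Sum>u1<?a. (if u1 mod R = c \<and> (\<forall>i<j. Q i (stored i u1)) then (cmod (reg_amp j u1))\<^sup>2 else 0))
       * (\<Sum>s<N. if Q j (basis_dec D R s) then (cmod (run_state j c (basis_dec D R s)))\<^sup>2 else 0)"
    by (simp add: sum_product)
  also have "(\<Sum>s<N. if Q j (basis_dec D R s) then (cmod (run_state j c (basis_dec D R s)))\<^sup>2 else 0) = run_prob Q j c"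
    unfolding run_prob_def B_run_def N_def by (rule sum_basis_dec)
  finally show ?case using Suc.IH by simp
qed

lemma run_prob_eq_prob_out:
  assumes "j < k" "\<And>b. Q j b = P (out (fst (rs ! j)) b)"
  shows "run_prob Q j c = prob_out D R (shift_list R L (snd (rs ! j)) c) (fst (rs ! j)) P"
  unfolding run_prob_def run_state_def prob_out_def B_run_def ws_nth_rs[OF assms(1)]
  using assms(2) by simp

lemma prob_out_comb_alg_ge:
  assumes "\<And>u. u < K \<Longrightarrow> (\<forall>i<k. Q i (stored i u)) \<Longrightarrow> P (G (\<lambda>j. stored j u))"
  shows "prob_out D R L (comb_alg G) P \<ge> (1 / R) * (\<Sum>c<R. \<Prod>i<k. run_prob Q i c)"
proof -
  have "(1 / R) * (\<Sum>c<R. \<Prod>i<k. run_prob Q i c)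
      = (\<Sum>c<R. \<Sum>u<K. if u mod R = c \<and> (\<forall>i<k. Q i (stored i u)) then (cmod (reg_amp k u))\<^sup>2 else 0)"
    unfolding K_def using sum_amp_stored by (simp add: sum_distrib_left)
  also have "\<dots> = (\<Sum>u<K. \<Sum>c<R. if u mod R = c \<and> (\<forall>i<k. Q i (stored i u)) then (cmod (reg_amp k u))\<^sup>2 else 0)"
    by (rule sum.swap)
  also have "\<dots> = (\<Sum>u<K. if (\<forall>i<k. Q i (stored i u)) then (cmod (reg_amp k u))\<^sup>2 else 0)"
  proof (intro sum.cong refl)
    fix u
    have "(\<Sum>c<R. if u mod R = c \<and> (\<forall>i<k. Q i (stored i u)) then (cmod (reg_amp k u))\<^sup>2 else 0)
        = (\<Sum>c<R. if c = u mod R then (if (\<forall>i<k. Q i (stored i u)) then (cmod (reg_amp k u))\<^sup>2 else 0) else 0)"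
      by (intro sum.cong refl) auto
    also have "\<dots> = (if (\<forall>i<k. Q i (stored i u)) then (cmod (reg_amp k u))\<^sup>2 else 0)"
      using R0 by simp
    finally show "(\<Sum>c<R. if u mod R = c \<and> (\<forall>i<k. Q i (stored i u)) then (cmod (reg_amp k u))\<^sup>2 else 0)
        = (if (\<forall>i<k. Q i (stored i u)) then (cmod (reg_amp k u))\<^sup>2 else 0)" .
  qed
  also have "\<dots> \<le> (\<Sum>u<K. if P (G (\<lambda>j. stored j u)) then (cmod (reg_amp k u))\<^sup>2 else 0)"
    by (intro sum_mono) (use assms in auto)
  also have "\<dots> = prob_out D R L (comb_alg G) P" by (rule prob_out_comb_alg[symmetric])
  finally show ?thesis .
qed

end

lemma shifted_runsI:
  assumes "run_list D R m rs" "L \<in> {1..D} \<rightarrow>\<^sub>E {1..R}"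
  shows "shifted_runs D R m rs L"
  using assms by (auto simp: shifted_runs_def shifted_runs_axioms_def)

lemma sq_norm_run_ops:
  assumes "finite BB" "\<forall>U\<in>set Us. unitary_on BB U" "unitary_on BB Orc"
  shows "sq_norm BB (run_ops BB Orc Us v) = sq_norm BB v"
  using assms(2)
proof (induction Us arbitrary: v)
  case Nil
  then show ?case by simp
next
  case (Cons U Us)
  then have "sq_norm BB (run_ops BB Orc Us (apply_mat BB U (apply_mat BB Orc v))) = sq_norm BB (apply_mat BB U (apply_mat BB Orc v))"
    by simp
  also have "\<dots> = sq_norm BB (apply_mat BB Orc v)" using sq_norm_unitary[OF assms(1)] Cons.prems by simp
  also have "\<dots> = sq_norm BB v" by (rule sq_norm_unitary[OF assms(1,3)])
  finally show ?case by simp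
qed

lemma sq_norm_init_state:
  assumes "D > 0" "R > 0" "mm0 > 0"
  shows "sq_norm (Bas D R mm0) init_state = 1"
proof -
  have e0: "(1, 0, 0) \<in> Bas D R mm0" using assms by (simp add: mem_Bas)
  have "sq_norm (Bas D R mm0) init_state = (\<Sum>b\<in>Bas D R mm0. if b = (1, 0, 0) then 1 else 0)"
    unfolding sq_norm_def init_state_def by (intro sum.cong refl) auto
  also have "\<dots> = 1" using e0 by simp
  finally show ?thesis .
qed

lemma sq_norm_final_state:
  assumes "valid_qalg D R A" "D > 0" "R > 0"
  shows "sq_norm (Bas D R (ws A)) (final_state D R L A) = 1"
proof -
  let ?B = "Bas D R (ws A)"
  have ne: "ops A \<noteq> []" and w: "ws A \<ge> 1" and u: "\<forall>U\<in>set (ops A). unitary_on ?B U"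
    using assms(1) by (auto simp: valid_qalg_def)
  have fin: "finite ?B" by simp
  have utl: "\<forall>U\<in>set (tl (ops A)). unitary_on ?B U" using u ne by (auto dest: list.set_sel(2))
  have uo: "unitary_on ?B (oracle_mat R L)" unfolding oracle_mat_eq_add_oracle by (rule unitary_add_oracle[OF assms(3)])
  have uh: "unitary_on ?B (hd (ops A))" using u hd_in_set[OF ne] by blast
  have "sq_norm ?B (final_state D R L A) = sq_norm ?B (apply_mat ?B (hd (ops A)) init_state)"
    unfolding final_state_def Let_def by (rule sq_norm_run_ops[OF fin utl uo])
  also have "\<dots> = sq_norm ?B init_state" by (rule sq_norm_unitary[OF fin uh])
  also have "\<dots> = 1" by (rule sq_norm_init_state[OF assms(2,3)]) (use w in simp)
  finally show ?thesis .
qed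

lemma prob_out_compl:
  assumes "valid_qalg D R A" "D > 0" "R > 0"
  shows "prob_out D R L A P + prob_out D R L A (\<lambda>r. \<not> P r) = 1"
proof -
  have "prob_out D R L A P + prob_out D R L A (\<lambda>r. \<not> P r) = sq_norm (Bas D R (ws A)) (final_state D R L A)"
    unfolding prob_out_def sq_norm_def sum.distrib[symmetric] by (intro sum.cong) auto
  then show ?thesis using sq_norm_final_state[OF assms] by simp
qed

lemma prob_out_nonneg: "prob_out D R L A P \<ge> 0"
  unfolding prob_out_def by (intro sum_nonneg) auto

lemma prob_out_le_1:
  assumes "valid_qalg D R A" "D > 0" "R > 0"
  shows "prob_out D R L A P \<le> 1"
  using prob_out_compl[OF assms, of L P] prob_out_nonneg[of D R L A "\<lambda>r. \<not> P r"] by simp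



lemma lang_1LD_witnessE:
  assumes "lang_1LD D R L"
  obtains x0 y0 where "x0 \<in> {1..D div 2}" "y0 \<in> {1..D div 2}" "L x0 = L (y0 + D div 2)"
    "\<And>p q. p \<in> {1..D div 2} \<Longrightarrow> q \<in> {1..D div 2} \<Longrightarrow> L p = L (q + D div 2) \<Longrightarrow> p = x0 \<and> q = y0"
proof -
  let ?h = "D div 2"
  have e0: "lst D L 0 = L" and e1: "lst D L 1 = (\<lambda>x. L (x + ?h))" by (auto simp: lst_def)
  have "inj_on (lst D L 0) {1..?h}" "inj_on (lst D L 1) {1..?h}"
    using assms by (auto simp: lang_1LD_def inst_1LD_def)
  then have inj0: "inj_on L {1..?h}" and inj1: "inj_on (\<lambda>x. L (x + ?h)) {1..?h}"
    unfolding e0 e1 by auto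
  have "card (lst_img D L 0 \<inter> lst_img D L 1) = 1" using assms by (simp add: lang_1LD_def)
  then obtain v where v: "lst_img D L 0 \<inter> lst_img D L 1 = {v}" by (rule card_1_singletonE)
  then have "v \<in> lst_img D L 0" "v \<in> lst_img D L 1" by auto
  then have "v \<in> L ` {1..?h}" "v \<in> (\<lambda>x. L (x + ?h)) ` {1..?h}" unfolding lst_img_def e0 e1 by auto
  then obtain x0 y0 where x0: "x0 \<in> {1..?h}" "v = L x0" and y0: "y0 \<in> {1..?h}" "v = L (y0 + ?h)"
    by blast
  show ?thesis
  proof (rule that[OF x0(1) y0(1)])
    show "L x0 = L (y0 + ?h)" using x0 y0 by simp
    fix p q assume p: "p \<in> {1..?h}" and q: "q \<in> {1..?h}" and e: "L p = L (q + ?h)"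
    have "L p \<in> L ` {1..?h}" by (rule imageI[OF p])
    moreover have "L p \<in> (\<lambda>x. L (x + ?h)) ` {1..?h}" using imageI[OF q, of "\<lambda>x. L (x + ?h)"] e by simp
    ultimately have "L p \<in> lst_img D L 0 \<inter> lst_img D L 1" unfolding lst_img_def e0 e1 by blast
    then have Lpv: "L p = v" using v by blast
    have "p = x0" using inj_onD[OF inj0 _ p x0(1)] Lpv x0(2) by simp
    moreover have "q = y0" using inj_onD[OF inj1 _ q y0(1)] Lpv y0(2) e by simp
    ultimately show "p = x0 \<and> q = y0" by simp
  qed
qed

definition good_shift :: "nat \<Rightarrow> nat \<Rightarrow> (nat \<Rightarrow> nat) \<Rightarrow> nat \<Rightarrow> bool" where
  "good_shift D R L c \<longleftrightarrow> c < R \<and> (\<forall>a\<in>{1..D}. \<forall>b\<in>{1..D}. (L a + c) mod R \<noteq> L b mod R)"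

lemma card_bad_shifts:
  assumes "R > 0"
  shows "card {c. c < R \<and> \<not> good_shift D R L c} \<le> D * D"
proof -
  have "{c. c < R \<and> \<not> good_shift D R L c} \<subseteq> (\<lambda>(a, b). unshift R (L a) (L b mod R)) ` ({1..D} \<times> {1..D})"
  proof
    fix c assume "c \<in> {c. c < R \<and> \<not> good_shift D R L c}"
    then obtain a b where ab: "a \<in> {1..D}" "b \<in> {1..D}" "(L a + c) mod R = L b mod R" "c < R"
      by (auto simp: good_shift_def)
    have "unshift R (L a) (L b mod R) = c"
      by (rule unshift_unique[OF assms _ ab(4)]) (use ab assms in \<open>auto simp: add.commute\<close>)
    then show "c \<in> (\<lambda>(a, b). unshift R (L a) (L b mod R)) ` ({1..D} \<times> {1..D})" using ab by force
  qed
  then have "card {c. c < R \<and> \<not> good_shift D R L c} \<le> card ((\<lambda>(a, b). unshift R (L a) (L b mod R)) ` ({1..D} \<times> {1..D}))"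
    by (intro card_mono) auto
  also have "\<dots> \<le> card ({1..D} \<times> {1..D})" by (rule card_image_le) simp
  also have "\<dots> = D * D" by (simp add: card_cartesian_product)
  finally show ?thesis .
qed

lemma mod_inj_atLeastAtMost:
  fixes x y R :: nat
  assumes "x \<in> {1..R}" "y \<in> {1..R}" "x mod R = y mod R"
  shows "x = y"
proof -
  have mx: "x mod R = (if x = R then 0 else x)"
  proof (cases "x = R")
    case False then have "x < R" using assms(1) by simp
    then show ?thesis using False by simp
  qed simp
  have my: "y mod R = (if y = R then 0 else y)"
  proof (cases "y = R")
    case False then have "y < R" using assms(2) by simp
    then show ?thesis using False by simp
  qed simp
  have "x \<ge> 1" "y \<ge> 1" using assms by auto
  then show ?thesis using assms(3) unfolding mx my by (cases "x = R"; cases "y = R") auto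
qed

lemma shift_list_in_atLeastAtMost:
  assumes "L \<in> {1..D} \<rightarrow>\<^sub>E {1..R}" "R > 0" "x \<in> {1..D}"
  shows "shift_list R L S c x \<in> {1..R}"
  using PiE_mem[OF assms(1,3)] mod_less_divisor[OF assms(2), of "L x + c - 1"]
  by (simp add: shift_list_def Suc_leI)

lemma shift_list_in_PiE:
  assumes L: "L \<in> {1..D} \<rightarrow>\<^sub>E {1..R}" and "R > 0" and S: "S \<subseteq> {1..D}"
  shows "shift_list R L S c \<in> {1..D} \<rightarrow>\<^sub>E {1..R}"
proof (rule PiE_I)
  show "shift_list R L S c x \<in> {1..R}" if "x \<in> {1..D}" for x
    by (rule shift_list_in_atLeastAtMost[OF L \<open>R > 0\<close> that])
  show "shift_list R L S c x = undefined" if "x \<notin> {1..D}" for x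
    using that S PiE_arb[OF L that] by (auto simp: shift_list_def)
qed

lemma shift_list_eq_iff:
  assumes L: "L \<in> {1..D} \<rightarrow>\<^sub>E {1..R}" and R0: "R > 0" and g: "good_shift D R L c"
    and a: "a \<in> {1..D}" and b: "b \<in> {1..D}"
  shows "shift_list R L S c a = shift_list R L S c b \<longleftrightarrow> (a \<in> S \<longleftrightarrow> b \<in> S) \<and> L a = L b"
proof -
  have La: "L a \<in> {1..R}" and Lb: "L b \<in> {1..R}" using PiE_mem[OF L a] PiE_mem[OF L b] by auto
  have "shift_list R L S c a = shift_list R L S c b \<longleftrightarrow> shift_list R L S c a mod R = shift_list R L S c b mod R"
    using mod_inj_atLeastAtMost[OF shift_list_in_atLeastAtMost[OF L R0 a] shift_list_in_atLeastAtMost[OF L R0 b]]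
    by auto
  also have "\<dots> \<longleftrightarrow> (L a + (if a \<in> S then c else 0)) mod R = (L b + (if b \<in> S then c else 0)) mod R"
    using La Lb by (simp add: shift_list_mod)
  also have "\<dots> \<longleftrightarrow> (a \<in> S \<longleftrightarrow> b \<in> S) \<and> L a = L b"
  proof (cases "a \<in> S"; cases "b \<in> S")
    assume "a \<in> S" "b \<in> S"
    have "(L a + c) mod R = (L b + c) mod R \<longleftrightarrow> L a mod R = L b mod R"
      using mod_add_right_inj_less[OF mod_less_divisor[OF R0] mod_less_divisor[OF R0], of "L a" c "L b"]
      by (auto simp: mod_add_left_eq[symmetric, of "L a"] mod_add_left_eq[symmetric, of "L b"])
    also have "\<dots> \<longleftrightarrow> L a = L b" using mod_inj_atLeastAtMost[OF La Lb] by auto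
    finally show ?thesis using \<open>a \<in> S\<close> \<open>b \<in> S\<close> by simp
  next
    assume "a \<in> S" "b \<notin> S"
    then show ?thesis using g a b by (auto simp: good_shift_def)
  next
    assume "a \<notin> S" "b \<in> S"
    have "(L b + c) mod R \<noteq> L a mod R" using g a b by (auto simp: good_shift_def)
    then show ?thesis using \<open>a \<notin> S\<close> \<open>b \<in> S\<close> by auto
  next
    assume "a \<notin> S" "b \<notin> S"
    then show ?thesis using mod_inj_atLeastAtMost[OF La Lb] by auto
  qed
  finally show ?thesis .
qed

lemma inj_on_shift_list:
  assumes "L \<in> {1..D} \<rightarrow>\<^sub>E {1..R}" "R > 0" "good_shift D R L c"
    and "f ` A \<subseteq> {1..D}" "inj_on (\<lambda>x. L (f x)) A"
  shows "inj_on (\<lambda>x. shift_list R L S c (f x)) A"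
proof (rule inj_onI)
  fix x y assume "x \<in> A" "y \<in> A" "shift_list R L S c (f x) = shift_list R L S c (f y)"
  then have "L (f x) = L (f y)" using shift_list_eq_iff[OF assms(1-3)] assms(4) by blast
  then show "x = y" using assms(5) \<open>x \<in> A\<close> \<open>y \<in> A\<close> by (auto dest: inj_onD)
qed

lemma shift_list_collisions:
  assumes L: "L \<in> {1..D} \<rightarrow>\<^sub>E {1..R}" and R0: "R > 0" and g: "good_shift D R L c" and Dh: "D = h + h"
    and x0: "x0 \<in> {1..h}" and y0: "y0 \<in> {1..h}" and xy: "L x0 = L (y0 + h)"
    and uniq: "\<And>p q. p \<in> {1..h} \<Longrightarrow> q \<in> {1..h} \<Longrightarrow> L p = L (q + h) \<Longrightarrow> p = x0 \<and> q = y0"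
  shows "lst_img D (shift_list R L S c) 0 \<inter> lst_img D (shift_list R L S c) 1
    = (if x0 \<in> S \<longleftrightarrow> y0 + h \<in> S then {shift_list R L S c x0} else {})"
    (is "?I = (if ?cond then {?L x0} else {})")
proof -
  have imgs: "lst_img D ?L 0 = ?L ` {1..h}" "lst_img D ?L 1 = (\<lambda>x. ?L (x + h)) ` {1..h}"
    using Dh by (auto simp: lst_img_def lst_def)
  have eqv: "?L p = ?L (q + h) \<longleftrightarrow> (p \<in> S \<longleftrightarrow> q + h \<in> S) \<and> L p = L (q + h)"
    if "p \<in> {1..h}" "q \<in> {1..h}" for p q
    by (rule shift_list_eq_iff[OF L R0 g]) (use that Dh in auto)
  show ?thesis
  proof
    show "?I \<subseteq> (if ?cond then {?L x0} else {})"
    proof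
      fix v assume "v \<in> ?I"
      then obtain p q where p: "p \<in> {1..h}" and q: "q \<in> {1..h}" and vp: "v = ?L p" and "v = ?L (q + h)"
        unfolding imgs by blast
      then have "(p \<in> S \<longleftrightarrow> q + h \<in> S) \<and> L p = L (q + h)" using eqv[OF p q] by simp
      moreover from this have "p = x0 \<and> q = y0" using uniq p q by blast
      ultimately show "v \<in> (if ?cond then {?L x0} else {})" using vp by simp
    qed
    show "(if ?cond then {?L x0} else {}) \<subseteq> ?I"
      using eqv[OF x0 y0] xy x0 y0 unfolding imgs by (auto intro!: image_eqI)
  qed
qed

lemma inst_1LD_shift_list:
  assumes lang: "lang_1LD D R L" and R0: "R > 0" and S: "S \<subseteq> {1..D}" and g: "good_shift D R L c"
    and Dh: "D = h + h"
    and x0: "x0 \<in> {1..h}" and y0: "y0 \<in> {1..h}" and xy: "L x0 = L (y0 + h)"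
    and uniq: "\<And>p q. p \<in> {1..h} \<Longrightarrow> q \<in> {1..h} \<Longrightarrow> L p = L (q + h) \<Longrightarrow> p = x0 \<and> q = y0"
  shows "inst_1LD D R (shift_list R L S c)"
    and "lang_1LD D R (shift_list R L S c) \<longleftrightarrow> (x0 \<in> S \<longleftrightarrow> y0 + h \<in> S)"
proof -
  let ?L = "shift_list R L S c"
  have L: "L \<in> {1..D} \<rightarrow>\<^sub>E {1..R}" and h: "D div 2 = h" using lang Dh by (simp_all add: lang_1LD_def inst_1LD_def)
  have lst: "lst D L' 0 = L'" "lst D L' 1 = (\<lambda>x. L' (x + h))" for L' using h by (auto simp: lst_def)
  have "inj_on L {1..h}" "inj_on (\<lambda>x. L (x + h)) {1..h}"
    using lang unfolding lang_1LD_def inst_1LD_def lst h by simp_all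
  then have "inj_on (\<lambda>x. ?L x) {1..h}" "inj_on (\<lambda>x. ?L (x + h)) {1..h}"
    using Dh by (auto intro!: inj_on_shift_list[OF L R0 g])
  then have inj: "inj_on (lst D ?L 0) {1..D div 2}" "inj_on (lst D ?L 1) {1..D div 2}"
    unfolding lst h by simp_all
  have "lst_img D ?L 0 \<inter> lst_img D ?L 1 = (if x0 \<in> S \<longleftrightarrow> y0 + h \<in> S then {?L x0} else {})"
    using uniq by (rule shift_list_collisions[OF L R0 g Dh x0 y0 xy])
  then have card: "card (lst_img D ?L 0 \<inter> lst_img D ?L 1) = (if x0 \<in> S \<longleftrightarrow> y0 + h \<in> S then 1 else 0)"
    by simp
  show "inst_1LD D R ?L" "lang_1LD D R ?L \<longleftrightarrow> (x0 \<in> S \<longleftrightarrow> y0 + h \<in> S)"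
    using shift_list_in_PiE[OF L R0 S] inj card by (simp_all add: inst_1LD_def lang_1LD_def)
qed

lemma finite_inst_1LD: "finite {L. inst_1LD D R L}"
proof (rule finite_subset)
  show "{L. inst_1LD D R L} \<subseteq> {1..D} \<rightarrow>\<^sub>E {1..R}" by (auto simp: inst_1LD_def)
  show "finite ({1..D} \<rightarrow>\<^sub>E {1..R})" by (intro finite_PiE) auto
qed

lemma adv_1LD_d_bounds:
  shows "lang_1LD D R L \<Longrightarrow> (1 + adv_1LD_d D R A) / 2 \<le> prob_out D R L A (\<lambda>r. r)"
    and "inst_1LD D R L \<Longrightarrow> \<not> lang_1LD D R L \<Longrightarrow> prob_out D R L A (\<lambda>r. r) \<le> (1 - adv_1LD_d D R A) / 2"
proof -
  let ?f = "\<lambda>L. prob_out D R L A (\<lambda>r. r)"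
  let ?S1 = "{?f L | L. lang_1LD D R L}"
  let ?S0 = "{?f L | L. inst_1LD D R L \<and> \<not> lang_1LD D R L}"
  have finite_image: "finite {?f L | L. inst_1LD D R L \<and> P L}" for P
  proof -
    have "{?f L | L. inst_1LD D R L \<and> P L} = ?f ` {L. inst_1LD D R L \<and> P L}" by auto
    moreover have "finite {L. inst_1LD D R L \<and> P L}"
      by (rule finite_subset[OF _ finite_inst_1LD[of D R]]) auto
    ultimately show ?thesis by simp
  qed
  have "?S1 = {?f L | L. inst_1LD D R L \<and> lang_1LD D R L}" by (auto simp: lang_1LD_def)
  then have f1: "finite ?S1" using finite_image by presburger
  have f0: "finite ?S0" by (rule finite_image)
  have adv1: "adv_1LD_d D R A \<le> 2 * Inf ?S1 - 1" and adv0: "adv_1LD_d D R A \<le> 1 - 2 * Sup ?S0"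
    unfolding adv_1LD_d_def Let_def by auto
  show "lang_1LD D R L \<Longrightarrow> (1 + adv_1LD_d D R A) / 2 \<le> ?f L"
  proof -
    assume "lang_1LD D R L"
    then have "Inf ?S1 \<le> ?f L" using f1 by (intro cInf_lower) (auto intro: bdd_below_finite)
    then show ?thesis using adv1 by simp
  qed
  show "inst_1LD D R L \<Longrightarrow> \<not> lang_1LD D R L \<Longrightarrow> ?f L \<le> (1 - adv_1LD_d D R A) / 2"
  proof -
    assume "inst_1LD D R L" "\<not> lang_1LD D R L"
    then have "?f L \<le> Sup ?S0" using f0 by (intro cSup_upper) (auto intro: bdd_above_finite)
    then show ?thesis using adv0 by simp
  qed
qed

lemma prob_out_decides_ge:
  assumes "valid_qalg D R A" "D > 0" "R > 0" "inst_1LD D R L"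
  shows "(1 + adv_1LD_d D R A) / 2 \<le> prob_out D R L A (\<lambda>r. r = lang_1LD D R L)"
proof (cases "lang_1LD D R L")
  case True
  then show ?thesis using adv_1LD_d_bounds(1)[of D R L A] by simp
next
  case False
  then show ?thesis
    using adv_1LD_d_bounds(2)[OF assms(4) False, of A] prob_out_compl[OF assms(1-3), of L "\<lambda>r. r"]
    by simp
qed

lemma ex_lang_1LD:
  assumes "D = h + h" "h \<ge> 1" "R \<ge> D"
  shows "\<exists>L. lang_1LD D R L"
proof -
  define L where "L x = (if x \<in> {1..D} then (if x = h + 1 then 1 else x) else undefined)" for x :: nat
  have h: "D div 2 = h" using assms(1) by simp
  have "L \<in> {1..D} \<rightarrow>\<^sub>E {1..R}" using assms by (auto simp: L_def)
  moreover have "inj_on (lst D L 0) {1..h}" "inj_on (lst D L 1) {1..h}"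
    using assms by (auto simp: inj_on_def lst_def L_def h)
  moreover have "lst_img D L 0 \<inter> lst_img D L 1 = {1}"
  proof
    show "lst_img D L 0 \<inter> lst_img D L 1 \<subseteq> {1}"
      using assms by (auto simp: lst_img_def lst_def L_def h)
    have "L 1 = 1" "L (1 + h) = 1" using assms by (auto simp: L_def)
    then show "{1} \<subseteq> lst_img D L 0 \<inter> lst_img D L 1"
      using assms unfolding lst_img_def lst_def h by (auto intro!: image_eqI[of _ _ 1])
  qed
  ultimately have "lang_1LD D R L"
    by (simp add: lang_1LD_def inst_1LD_def h)
  then show ?thesis by blast
qed

lemma ex_nonlang_1LD:
  assumes "D = h + h" "h \<ge> 1" "R \<ge> D"
  shows "\<exists>L. inst_1LD D R L \<and> \<not> lang_1LD D R L"
proof -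
  define L where "L x = (if x \<in> {1..D} then x else undefined)" for x :: nat
  have h: "D div 2 = h" using assms(1) by simp
  have "L \<in> {1..D} \<rightarrow>\<^sub>E {1..R}" using assms by (auto simp: L_def)
  moreover have "inj_on (lst D L 0) {1..h}" "inj_on (lst D L 1) {1..h}"
    using assms by (auto simp: inj_on_def lst_def L_def h)
  moreover have "lst_img D L 0 \<inter> lst_img D L 1 = {}"
    using assms by (auto simp: lst_img_def lst_def L_def h)
  ultimately have "inst_1LD D R L \<and> \<not> lang_1LD D R L"
    by (simp add: lang_1LD_def inst_1LD_def h)
  then show ?thesis by blast
qed

lemma adv_1LD_d_le_1:
  assumes "valid_qalg D R A" "D = h + h" "h \<ge> 1" "R \<ge> D"
  shows "adv_1LD_d D R A \<le> 1"
proof -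
  obtain L where "lang_1LD D R L" using ex_lang_1LD[OF assms(2-4)] ..
  moreover have "prob_out D R L A (\<lambda>r. r) \<le> 1"
    by (rule prob_out_le_1) (use assms in auto)
  ultimately show ?thesis using adv_1LD_d_bounds(1)[of D R L A] by simp
qed

lemma prob_out_no_queries:
  assumes "num_queries A = 0"
  shows "prob_out D R L A P = prob_out D R L' A P"
proof -
  have "tl (ops A) = []" using assms by (cases "ops A") (auto simp: num_queries_def)
  then have "final_state D R L A = final_state D R L' A" by (simp add: final_state_def Let_def)
  then show ?thesis by (simp only: prob_out_def)
qed

lemma adv_1LD_d_nonpos_if_no_queries:
  assumes "num_queries A = 0" "D = h + h" "h \<ge> 1" "R \<ge> D"
  shows "adv_1LD_d D R A \<le> 0"
proof -
  obtain L1 where L1: "lang_1LD D R L1" using ex_lang_1LD[OF assms(2-4)] ..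
  obtain L0 where L0: "inst_1LD D R L0" "\<not> lang_1LD D R L0" using ex_nonlang_1LD[OF assms(2-4)] by blast
  have "prob_out D R L1 A (\<lambda>r. r) = prob_out D R L0 A (\<lambda>r. r)"
    by (rule prob_out_no_queries[OF assms(1)])
  then show ?thesis using adv_1LD_d_bounds(1)[OF L1, of A] adv_1LD_d_bounds(2)[OF L0, of A] by simp
qed

lemma adv_1LD_s_ge:
  assumes "\<exists>L. lang_1LD D R L"
    and "\<And>L. lang_1LD D R L \<Longrightarrow> X \<le> prob_out D R L A (witness_1LD D L)"
  shows "X \<le> adv_1LD_s D R A"
  unfolding adv_1LD_s_def by (rule cInf_greatest) (use assms in auto)

lemma average_prod_ge:
  fixes p :: "nat \<Rightarrow> nat \<Rightarrow> real" and b \<delta> :: real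
  assumes p01: "\<And>c i. c < R \<Longrightarrow> i < n \<Longrightarrow> 0 \<le> p c i \<and> p c i \<le> 1"
    and good: "\<And>c i. c < R \<Longrightarrow> good c \<Longrightarrow> i < n \<Longrightarrow> 1 - \<delta> \<le> p c i"
    and bad: "real (card {c. c < R \<and> \<not> good c}) \<le> b"
    and R0: "R > 0" and \<delta>0: "\<delta> \<ge> 0"
  shows "1 - b / R - n * \<delta> \<le> (1 / R) * (\<Sum>c<R. \<Prod>i<n. p c i)"
proof -
  define X where "X = max (1 - n * \<delta>) 0"
  have X: "0 \<le> X" "X \<le> 1" "1 - n * \<delta> \<le> X" using \<delta>0 by (auto simp: X_def)
  have prod_ge: "(if good c then X else 0) \<le> (\<Prod>i<n. p c i)" if c: "c < R" for c
  proof -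
    have "0 \<le> (\<Prod>i<n. p c i)" using p01[OF c] by (intro prod_nonneg) auto
    moreover have "1 - n * \<delta> \<le> (\<Prod>i<n. p c i)" if "good c"
    proof -
      have "(\<Sum>i<n. 1 - p c i) \<le> (\<Sum>i<n. \<delta>)"
      proof (rule sum_mono)
        fix i assume "i \<in> {..<n}"
        then show "1 - p c i \<le> \<delta>" using good[OF c that, of i] by simp
      qed
      moreover have "1 - (\<Sum>i<n. 1 - p c i) \<le> (\<Prod>i<n. p c i)"
        using Weierstrass_prod_ineq[of "{..<n}" "\<lambda>i. 1 - p c i"] p01[OF c] by simp
      ultimately show ?thesis by simp
    qed
    ultimately show ?thesis unfolding X_def by auto
  qed
  have "{c. c < R \<and> good c} \<union> {c. c < R \<and> \<not> good c} = {..<R}" by auto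
  then have "R = card ({c. c < R \<and> good c} \<union> {c. c < R \<and> \<not> good c})"
    by (simp only: card_lessThan)
  also have "\<dots> = card {c. c < R \<and> good c} + card {c. c < R \<and> \<not> good c}"
    by (rule card_Un_disjoint) auto
  finally have "R = card {c. c < R \<and> good c} + card {c. c < R \<and> \<not> good c}" .
  then have card_good: "real R - b \<le> real (card {c. c < R \<and> good c})"
    using bad by simp
  have "(real R - b) * X \<le> real (card {c. c < R \<and> good c}) * X"
    using card_good X(1) by (rule mult_right_mono)
  also have "\<dots> = (\<Sum>c<R. if good c then X else 0)"
  proof -
    have "{..<R} \<inter> {c. good c} = {c. c < R \<and> good c}" by auto
    then show ?thesis by (simp add: sum.If_cases)
  qed
  also have "\<dots> \<le> (\<Sum>c<R. \<Prod>i<n. p c i)" by (intro sum_mono prod_ge) simp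
  finally have sum_ge: "(real R - b) * X \<le> (\<Sum>c<R. \<Prod>i<n. p c i)" .
  have "0 \<le> b" using bad of_nat_0_le_iff order_trans by blast
  then have "b * X \<le> b" using X(2) by (simp add: mult_left_le)
  then have "b / R * X \<le> b / R" by (simp add: divide_right_mono)
  then have "1 - b / R - n * \<delta> \<le> X - b / R * X" using X(3) by linarith
  also have "\<dots> = (1 / R) * ((real R - b) * X)" using R0 by (simp add: field_simps)
  also have "\<dots> \<le> (1 / R) * (\<Sum>c<R. \<Prod>i<n. p c i)" using sum_ge R0 by (simp add: divide_right_mono)
  finally show ?thesis .
qed

lemma sum_binary_digits:
  fixes n :: nat
  assumes "n < 2 ^ e"
  shows "(\<Sum>i<e. if odd (n div 2 ^ i) then 2 ^ i else 0) = n"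
proof -
  have "(\<Sum>i<e. if odd (n div 2 ^ i) then 2 ^ i else 0) = n mod 2 ^ e"
  proof (induction e)
    case (Suc e)
    have "n mod 2 ^ Suc e = 2 ^ e * (n div 2 ^ e mod 2) + n mod 2 ^ e"
      using mod_mult2_eq[of n "2 ^ e" 2] by (simp add: mult.commute)
    also have "2 ^ e * (n div 2 ^ e mod 2) = (if odd (n div 2 ^ e) then 2 ^ e else 0)"
      by (simp add: odd_iff_mod_2_eq_one mod2_eq_if)
    finally show ?case using Suc by simp
  qed simp
  then show ?thesis using assms by simp
qed

definition bit_positions :: "nat \<Rightarrow> nat \<Rightarrow> nat set" where
  "bit_positions h i = {p \<in> {1..h}. odd ((p - 1) div 2 ^ i)}"

text \<open>The collision survives the shift, so that the run answers
  \<open>True\<close>, exactly when the corresponding bit of the witness is 0.\<close>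

definition bit_runs :: "bool qalg \<Rightarrow> nat \<Rightarrow> nat \<Rightarrow> (bool qalg \<times> nat set) list" where
  "bit_runs Ad h e = map (\<lambda>i. (Ad, bit_positions h i)) [0..<e]
     @ map (\<lambda>i. (Ad, (\<lambda>p. p + h) ` bit_positions h i)) [0..<e]"

definition bit_answer :: "nat \<Rightarrow> nat \<Rightarrow> nat \<Rightarrow> nat \<Rightarrow> bool" where
  "bit_answer e x y j = (if j < e then even ((x - 1) div 2 ^ j) else even ((y - 1) div 2 ^ (j - e)))"

definition bit_decode :: "bool qalg \<Rightarrow> nat \<Rightarrow> (nat \<Rightarrow> basis) \<Rightarrow> nat \<times> nat" where
  "bit_decode Ad e sl = (1 + (\<Sum>i<e. if out Ad (sl i) then 0 else 2 ^ i),
     1 + (\<Sum>i<e. if out Ad (sl (e + i)) then 0 else 2 ^ i))"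

definition bit_search :: "nat \<Rightarrow> nat \<Rightarrow> bool qalg \<Rightarrow> nat \<Rightarrow> (nat \<times> nat) qalg" where
  "bit_search D R Ad e = run_list.comb_alg D R (ws Ad) (bit_runs Ad (D div 2) e) (bit_decode Ad e)"

lemma length_bit_runs: "length (bit_runs Ad h e) = 2 * e"
  by (simp add: bit_runs_def)

lemma nth_bit_runs:
  "j < 2 * e \<Longrightarrow> bit_runs Ad h e ! j
     = (Ad, if j < e then bit_positions h j else (\<lambda>p. p + h) ` bit_positions h (j - e))"
  by (auto simp: bit_runs_def nth_append)

lemma run_list_bit_runs:
  assumes "D > 0" "R \<ge> 2" "valid_qalg D R Ad" "num_queries Ad \<ge> 1" "e \<ge> 1"
  shows "run_list D R (ws Ad) (bit_runs Ad h e)"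
proof
  show "D > 0" "R \<ge> 2" using assms by auto
  show "ws Ad > 0" using assms(3) by (simp add: valid_qalg_def)
  show "valid_qalg D R A \<and> ws A = ws Ad \<and> num_queries A \<ge> 1" if "(A, S) \<in> set (bit_runs Ad h e)" for A S
    using that assms by (auto simp: bit_runs_def)
  show "bit_runs Ad h e \<noteq> []" using assms(5) by (simp add: bit_runs_def)
qed

lemma bit_decode_eq:
  assumes "x \<in> {1..2 ^ e}" "y \<in> {1..2 ^ e}"
    and answers: "\<And>j. j < 2 * e \<Longrightarrow> out Ad (sl j) = bit_answer e x y j"
  shows "bit_decode Ad e sl = (x, y)"
proof -
  have "(\<Sum>i<e. if out Ad (sl i) then 0 else 2 ^ i) = (\<Sum>i<e. if odd ((x - 1) div 2 ^ i) then 2 ^ i else 0)"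
    by (intro sum.cong refl) (simp add: answers bit_answer_def)
  also have "\<dots> = x - 1" by (rule sum_binary_digits) (use assms(1) in auto)
  finally have x: "(\<Sum>i<e. if out Ad (sl i) then 0 else 2 ^ i) = x - 1" .
  have "(\<Sum>i<e. if out Ad (sl (e + i)) then 0 else 2 ^ i) = (\<Sum>i<e. if odd ((y - 1) div 2 ^ i) then 2 ^ i else 0)"
    by (intro sum.cong refl) (simp add: answers bit_answer_def)
  also have "\<dots> = y - 1" by (rule sum_binary_digits) (use assms(2) in auto)
  finally show ?thesis using x assms(1,2) by (simp add: bit_decode_def)
qed

lemma bit_runs_separate_iff:
  assumes "x \<in> {1..h}" "y \<in> {1..h}" "j < 2 * e"
  shows "(x \<in> snd (bit_runs Ad h e ! j) \<longleftrightarrow> y + h \<in> snd (bit_runs Ad h e ! j)) \<longleftrightarrow> bit_answer e x y j"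
proof (cases "j < e")
  case True
  then show ?thesis using assms by (auto simp: nth_bit_runs bit_positions_def bit_answer_def)
next
  case False
  have "y + h \<in> (\<lambda>p. p + h) ` bit_positions h (j - e) \<longleftrightarrow> y \<in> bit_positions h (j - e)" by auto
  then show ?thesis using assms False by (auto simp: nth_bit_runs bit_positions_def bit_answer_def)
qed

lemma prob_bit_run_ge:
  assumes lang: "lang_1LD D R L" and Dh: "D = h + h" and valid: "valid_qalg D R Ad"
    and g: "good_shift D R L c" and i: "i < 2 * e"
    and x0: "x0 \<in> {1..h}" and y0: "y0 \<in> {1..h}" and xy: "L x0 = L (y0 + h)"
    and uniq: "\<And>p q. p \<in> {1..h} \<Longrightarrow> q \<in> {1..h} \<Longrightarrow> L p = L (q + h) \<Longrightarrow> p = x0 \<and> q = y0"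
  shows "(1 + adv_1LD_d D R Ad) / 2
    \<le> prob_out D R (shift_list R L (snd (bit_runs Ad h e ! i)) c) Ad (\<lambda>r. r = bit_answer e x0 y0 i)"
proof -
  let ?S = "snd (bit_runs Ad h e ! i)"
  have D0: "D > 0" and R0: "R > 0" using x0 Dh g by (auto simp: good_shift_def)
  have S: "?S \<subseteq> {1..D}" using i Dh by (auto simp: nth_bit_runs bit_positions_def)
  have shifted: "inst_1LD D R (shift_list R L ?S c)"
      "lang_1LD D R (shift_list R L ?S c) \<longleftrightarrow> (x0 \<in> ?S \<longleftrightarrow> y0 + h \<in> ?S)"
    by (rule inst_1LD_shift_list[OF lang R0 S g Dh x0 y0 xy], rule uniq, assumption+)+
  have "lang_1LD D R (shift_list R L ?S c) = bit_answer e x0 y0 i"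
    using shifted(2) bit_runs_separate_iff[OF x0 y0 i] by simp
  then show ?thesis using prob_out_decides_ge[OF valid D0 R0 shifted(1)] by simp
qed

lemma prob_bit_search_ge:
  assumes Dh: "D = h + h" and he: "h = 2 ^ e" and e1: "e \<ge> 1" and RD: "R \<ge> D"
    and valid: "valid_qalg D R Ad" and nq: "num_queries Ad \<ge> 1" and lang: "lang_1LD D R L"
  shows "1 - real D ^ 2 / R - e * (1 - adv_1LD_d D R Ad) \<le> prob_out D R L (bit_search D R Ad e) (witness_1LD D L)"
proof -
  let ?rs = "bit_runs Ad h e" and ?adv = "adv_1LD_d D R Ad"
  have h1: "h \<ge> 1" and hD: "D div 2 = h" using he Dh by simp_all
  have D0: "D > 0" and R2: "R \<ge> 2" and R0: "R > 0" using Dh h1 RD by auto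
  have LP: "L \<in> {1..D} \<rightarrow>\<^sub>E {1..R}" using lang by (simp add: lang_1LD_def inst_1LD_def)
  interpret r: shifted_runs D R "ws Ad" ?rs L
    by (rule shifted_runsI[OF run_list_bit_runs[OF D0 R2 valid nq e1] LP])
  have k: "r.k = 2 * e" by (simp add: r.k_def length_bit_runs)
  obtain x0 y0 where x0: "x0 \<in> {1..h}" and y0: "y0 \<in> {1..h}" and xy: "L x0 = L (y0 + h)"
    and uniq: "\<And>p q. p \<in> {1..h} \<Longrightarrow> q \<in> {1..h} \<Longrightarrow> L p = L (q + h) \<Longrightarrow> p = x0 \<and> q = y0"
    by (rule lang_1LD_witnessE[OF lang, unfolded hD]) (rule that; assumption)
  define Q where "Q j b \<longleftrightarrow> out Ad b = bit_answer e x0 y0 j" for j b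
  have run_prob_eq: "r.run_prob Q i c
      = prob_out D R (shift_list R L (snd (?rs ! i)) c) Ad (\<lambda>r. r = bit_answer e x0 y0 i)"
    if "i < 2 * e" for i c
  proof -
    have "fst (?rs ! i) = Ad" using that by (simp add: nth_bit_runs)
    then show ?thesis using r.run_prob_eq_prob_out[of i Q] that k by (simp add: Q_def)
  qed
  have "(1 / R) * (\<Sum>c<R. \<Prod>i<r.k. r.run_prob Q i c)
      \<le> prob_out D R L (r.comb_alg (bit_decode Ad e)) (witness_1LD D L)"
  proof (rule r.prob_out_comb_alg_ge)
    fix u assume "\<forall>i<r.k. Q i (r.stored i u)"
    then have "out Ad (r.stored j u) = bit_answer e x0 y0 j" if "j < 2 * e" for j
      using that k by (simp add: Q_def)
    then have "bit_decode Ad e (\<lambda>j. r.stored j u) = (x0, y0)"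
      using x0 y0 he by (intro bit_decode_eq) simp_all
    then show "witness_1LD D L (bit_decode Ad e (\<lambda>j. r.stored j u))"
      using x0 y0 xy hD by (simp add: witness_1LD_def lst_def)
  qed
  moreover have "1 - real (D * D) / R - r.k * ((1 - ?adv) / 2) \<le> (1 / R) * (\<Sum>c<R. \<Prod>i<r.k. r.run_prob Q i c)"
  proof (rule average_prod_ge)
    show "0 \<le> r.run_prob Q i c \<and> r.run_prob Q i c \<le> 1" if "i < r.k" for c i
      using prob_out_nonneg prob_out_le_1[OF valid D0 R0] that k by (simp add: run_prob_eq)
    show "1 - (1 - ?adv) / 2 \<le> r.run_prob Q i c" if "good_shift D R L c" and "i < r.k" for c i
    proof -
      have i: "i < 2 * e" using that(2) k by simp
      have "(1 + ?adv) / 2 \<le> r.run_prob Q i c"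
        unfolding run_prob_eq[OF i]
        by (rule prob_bit_run_ge[OF lang Dh valid that(1) i x0 y0 xy]) (rule uniq; assumption)
      then show ?thesis by (simp add: field_simps)
    qed
    show "real (card {c. c < R \<and> \<not> good_shift D R L c}) \<le> real (D * D)"
      by (rule of_nat_mono) (rule card_bad_shifts[OF R0])
    show "0 \<le> (1 - ?adv) / 2" using adv_1LD_d_le_1[OF valid Dh h1 RD] by simp
  qed (use R0 in simp)
  ultimately show ?thesis using k by (simp add: bit_search_def hD power2_eq_square)
qed

lemma bit_search_props:
  assumes "D = h + h" "h = 2 ^ e" "e \<ge> 1" "R \<ge> D" "valid_qalg D R Ad" "num_queries Ad \<ge> 1"
  shows "valid_qalg D R (bit_search D R Ad e)"
    and "num_queries (bit_search D R Ad e) = 2 * e * num_queries Ad"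
proof -
  have "(1::nat) \<le> 2 ^ e" by simp
  then have "D div 2 = h" "D > 0" "R \<ge> 2" using assms(1,2,4) by linarith+
  then interpret r: run_list D R "ws Ad" "bit_runs Ad h e"
    using run_list_bit_runs assms by blast
  show "valid_qalg D R (bit_search D R Ad e)"
    using r.valid_comb_alg \<open>D div 2 = h\<close> by (simp add: bit_search_def)
  show "num_queries (bit_search D R Ad e) = 2 * e * num_queries Ad"
    using r.num_queries_comb_alg[of "bit_decode Ad e"] \<open>D div 2 = h\<close>
    by (simp add: bit_search_def bit_runs_def comp_def sum_list_triv)
qed

definition swap_init :: "nat \<Rightarrow> basis \<Rightarrow> basis" where
  "swap_init i b = (if b = (1, 0, 0) then (i, 0, 0) else if b = (i, 0, 0) then (1, 0, 0) else b)"

definition query_alg :: "nat \<Rightarrow> bool qalg" where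
  "query_alg i = \<lparr>ws = 1, ops = [perm_mat (swap_init i), perm_mat id], out = (\<lambda>_. False)\<rparr>"

definition query_runs :: "nat \<Rightarrow> (bool qalg \<times> nat set) list" where
  "query_runs D = map (\<lambda>i. (query_alg (Suc i), {})) [0..<D]"

definition query_decode :: "nat \<Rightarrow> (nat \<Rightarrow> basis) \<Rightarrow> nat \<times> nat" where
  "query_decode h sl = (SOME w. fst w \<in> {1..h} \<and> snd w \<in> {1..h} \<and>
      fst (snd (sl (fst w - 1))) = fst (snd (sl (snd w + h - 1))))"

definition query_search :: "nat \<Rightarrow> nat \<Rightarrow> (nat \<times> nat) qalg" where
  "query_search D R = run_list.comb_alg D R 1 (query_runs D) (query_decode (D div 2))"

lemma swap_init_swap_init: "swap_init i (swap_init i b) = b"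
  by (auto simp: swap_init_def)

lemma swap_init_in_Bas: "i \<in> {1..D} \<Longrightarrow> b \<in> Bas D R 1 \<Longrightarrow> swap_init i b \<in> Bas D R 1"
  by (auto simp: swap_init_def mem_Bas)

lemma inj_on_swap_init: "inj_on (swap_init i) B"
  by (rule inj_on_inverseI[where g = "swap_init i"]) (rule swap_init_swap_init)

lemma num_queries_query_alg [simp]: "num_queries (query_alg i) = 1"
  and ws_query_alg [simp]: "ws (query_alg i) = 1"
  by (simp_all add: num_queries_def query_alg_def)

lemma valid_query_alg:
  assumes "i \<in> {1..D}"
  shows "valid_qalg D R (query_alg i)"
proof -
  have "unitary_on (Bas D R 1) (perm_mat (swap_init i))"
    by (rule unitary_perm_mat[OF finite_Bas _ inj_on_swap_init]) (rule swap_init_in_Bas[OF assms])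
  moreover have "unitary_on (Bas D R 1) (perm_mat id)"
    by (rule unitary_perm_mat) auto
  ultimately show ?thesis by (simp add: valid_qalg_def query_alg_def)
qed

lemma final_state_query_alg:
  assumes i: "i \<in> {1..D}" and R0: "R > 0" and b: "(x, y, a) \<in> Bas D R 1"
  shows "final_state D R L' (query_alg i) (x, y, a) = (if x = i \<and> y = L' i mod R then 1 else 0)"
proof -
  let ?B = "Bas D R 1"
  have a0: "a = 0" using b by (simp add: mem_Bas)
  have fs: "final_state D R L' (query_alg i) = apply_mat ?B (perm_mat id) (apply_mat ?B (oracle_mat R L') (apply_mat ?B (perm_mat (swap_init i)) init_state))"
    by (simp add: final_state_def query_alg_def Let_def)
  have s1: "apply_mat ?B (perm_mat id) v (x, y, a) = v (x, y, a)" for v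
    by (rule apply_perm_mat[OF finite_Bas inj_on_id b]) simp
  have b2: "(x, unshift R (L' x) y, a) \<in> ?B" using b R0 by (simp add: mem_Bas unshift_less)
  have s2: "apply_mat ?B (oracle_mat R L') v (x, y, a) = v (x, unshift R (L' x) y, a)" for v
    unfolding oracle_mat_eq_add_oracle by (rule apply_add_oracle[OF R0 b])
  have s3: "apply_mat ?B (perm_mat (swap_init i)) init_state (x, unshift R (L' x) y, a) = init_state (swap_init i (x, unshift R (L' x) y, a))"
    by (rule apply_perm_mat[OF finite_Bas inj_on_swap_init swap_init_in_Bas[OF i b2]]) (rule swap_init_swap_init)
  have t: "swap_init i (x, unshift R (L' x) y, a) = (1, 0, 0) \<longleftrightarrow> (x, unshift R (L' x) y, a) = (i, 0, 0)"
    by (metis swap_init_swap_init swap_init_def)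
  have ys: "unshift R (L' x) y = 0 \<longleftrightarrow> y = L' x mod R"
  proof
    assume "unshift R (L' x) y = 0"
    then show "y = L' x mod R" using unshift_add_mod[OF R0, of y "L' x"] b by (simp add: mem_Bas)
  next
    assume "y = L' x mod R"
    then show "unshift R (L' x) y = 0" using unshift_unique[OF R0 _ R0, of y "L' x"] mod_less_divisor[OF R0] by simp
  qed
  show ?thesis unfolding fs s1 s2 s3 using t ys a0 by (auto simp: init_state_def)
qed

lemma run_list_query_runs:
  assumes "D > 0" "R \<ge> 2"
  shows "run_list D R 1 (query_runs D)"
proof
  show "D > 0" "R \<ge> 2" "(1::nat) > 0" using assms by auto
  show "valid_qalg D R A \<and> ws A = 1 \<and> num_queries A \<ge> 1" if "(A, S) \<in> set (query_runs D)" for A S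
    using that valid_query_alg by (auto simp: query_runs_def)
  show "query_runs D \<noteq> []" using assms by (simp add: query_runs_def)
qed

lemma sum_final_state_query_alg:
  assumes "i \<in> {1..D}" "R > 0"
  shows "(\<Sum>b\<in>Bas D R 1. if fst (snd b) = L' i mod R then (cmod (final_state D R L' (query_alg i) b))\<^sup>2 else 0) = 1"
proof -
  have "(\<Sum>b\<in>Bas D R 1. if fst (snd b) = L' i mod R then (cmod (final_state D R L' (query_alg i) b))\<^sup>2 else 0)
      = (\<Sum>b\<in>Bas D R 1. if b = (i, L' i mod R, 0) then 1 else 0)"
  proof (intro sum.cong refl)
    fix b assume "b \<in> Bas D R 1"
    moreover obtain x y a where "b = (x, y, a)" by (cases b)
    ultimately show "(if fst (snd b) = L' i mod R then (cmod (final_state D R L' (query_alg i) b))\<^sup>2 else 0)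
        = (if b = (i, L' i mod R, 0) then 1 else 0)"
      by (auto simp: final_state_query_alg[OF assms] mem_Bas)
  qed
  also have "\<dots> = 1" using assms by (simp add: mem_Bas)
  finally show ?thesis .
qed

lemma query_decode_witness:
  assumes lang: "lang_1LD D R L" and Dh: "D = h + h"
    and stored: "\<And>j. j < D \<Longrightarrow> fst (snd (sl j)) = L (Suc j) mod R"
  shows "witness_1LD D L (query_decode h sl)"
proof -
  have LP: "L \<in> {1..D} \<rightarrow>\<^sub>E {1..R}" using lang by (simp add: lang_1LD_def inst_1LD_def)
  have hD: "D div 2 = h" using Dh by simp
  let ?P = "\<lambda>w. fst w \<in> {1..h} \<and> snd w \<in> {1..h} \<and> fst (snd (sl (fst w - 1))) = fst (snd (sl (snd w + h - 1)))"
  have P_iff: "?P (x, y) \<longleftrightarrow> x \<in> {1..h} \<and> y \<in> {1..h} \<and> L x = L (y + h)" for x y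
  proof -
    have "L x mod R = L (y + h) mod R \<longleftrightarrow> L x = L (y + h)" if "x \<in> {1..D}" "y + h \<in> {1..D}"
      using mod_inj_atLeastAtMost[OF PiE_mem[OF LP that(1)] PiE_mem[OF LP that(2)]] by auto
    then show ?thesis using stored[of "x - 1"] stored[of "y + h - 1"] Dh by auto
  qed
  obtain x0 y0 where "x0 \<in> {1..h}" "y0 \<in> {1..h}" "L x0 = L (y0 + h)"
    by (rule lang_1LD_witnessE[OF lang, unfolded hD])
  then have "?P (x0, y0)" using P_iff by blast
  then have "?P (query_decode h sl)" unfolding query_decode_def by (rule someI)
  moreover obtain x y where "query_decode h sl = (x, y)" by fastforce
  ultimately show ?thesis using P_iff[of x y] hD by (simp add: witness_1LD_def lst_def)
qed

lemma prob_query_search: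
  assumes Dh: "D = h + h" and h1: "h \<ge> 1" and RD: "R \<ge> D" and lang: "lang_1LD D R L"
  shows "1 \<le> prob_out D R L (query_search D R) (witness_1LD D L)"
proof -
  have D0: "D > 0" and R2: "R \<ge> 2" and R0: "R > 0" and hD: "D div 2 = h" using Dh h1 RD by auto
  have LP: "L \<in> {1..D} \<rightarrow>\<^sub>E {1..R}" using lang by (simp add: lang_1LD_def inst_1LD_def)
  interpret r: shifted_runs D R 1 "query_runs D" L
    by (rule shifted_runsI[OF run_list_query_runs[OF D0 R2] LP])
  define Q where "Q j b \<longleftrightarrow> fst (snd b) = L (Suc j) mod R" for j and b :: basis
  have k: "r.k = D" unfolding r.k_def by (simp add: query_runs_def)
  have "(1 / R) * (\<Sum>c<R. \<Prod>i<r.k. r.run_prob Q i c) \<le> prob_out D R L (r.comb_alg (query_decode h)) (witness_1LD D L)"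
    by (rule r.prob_out_comb_alg_ge, rule query_decode_witness[OF lang Dh]) (use k in \<open>auto simp: Q_def\<close>)
  moreover have "r.run_prob Q i c = 1" if "i < D" for i c
  proof -
    have "query_runs D ! i = (query_alg (Suc i), {})" using that by (simp add: query_runs_def)
    moreover have "shift_list R L {} c = L" by (rule ext) (simp add: shift_list_def)
    ultimately have "r.run_state i c = final_state D R L (query_alg (Suc i))"
      unfolding r.run_state_def by simp
    then show ?thesis using sum_final_state_query_alg[of "Suc i" D R L] that R0
      unfolding r.run_prob_def r.B_run_def Q_def by (simp only:) simp
  qed
  ultimately show ?thesis using k R0 by (simp add: query_search_def hD)
qed

lemma query_search_props:
  assumes "D > 0" "R \<ge> 2"
  shows "valid_qalg D R (query_search D R)" and "num_queries (query_search D R) = D"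
proof -
  interpret r: run_list D R 1 "query_runs D" by (rule run_list_query_runs[OF assms])
  show "valid_qalg D R (query_search D R)" using r.valid_comb_alg by (simp add: query_search_def)
  show "num_queries (query_search D R) = D"
    using r.num_queries_comb_alg by (simp add: query_search_def query_runs_def comp_def sum_list_triv)
qed

definition trivial_alg :: "(nat \<times> nat) qalg" where
  "trivial_alg = \<lparr>ws = 1, ops = [perm_mat id], out = (\<lambda>_. (0, 0))\<rparr>"

lemma trivial_alg_props: "valid_qalg D R trivial_alg" "num_queries trivial_alg = 0"
proof -
  have "unitary_on (Bas D R 1) (perm_mat id)" by (rule unitary_perm_mat) auto
  then show "valid_qalg D R trivial_alg" by (simp add: valid_qalg_def trivial_alg_def)
  show "num_queries trivial_alg = 0" by (simp add: num_queries_def trivial_alg_def)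
qed

lemma search_alg_few_lists:
  assumes Dh: "D = 2 ^ e + 2 ^ e" and e: "1 \<le> e" "e \<le> 2" and RD: "R \<ge> D" and q: "q \<ge> 1"
    and valid: "valid_qalg D R Ad"
  shows "\<exists>As. valid_qalg D R As \<and> real (num_queries As) \<le> 3 * real q * (real e + 1) \<and>
           1 - real D ^ 2 / real R - 1.5 * (real e - 1) * (1 - adv_1LD_d D R Ad) \<le> adv_1LD_s D R As"
proof (intro exI conjI)
  have "(1::nat) \<le> 2 ^ e" by simp
  then have "D > 0" "R \<ge> 2" using Dh RD by linarith+
  then show "valid_qalg D R (query_search D R)" by (rule query_search_props)
  have "real D \<le> real (3 * q * (e + 1))"
    using Dh e q by (intro of_nat_mono) (auto simp: le_Suc_eq numeral_2_eq_2)
  then show "real (num_queries (query_search D R)) \<le> 3 * real q * (real e + 1)"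
    using query_search_props(2)[OF \<open>D > 0\<close> \<open>R \<ge> 2\<close>] by (simp add: algebra_simps)
  have "1 \<le> adv_1LD_s D R (query_search D R)"
    using adv_1LD_s_ge[OF ex_lang_1LD[OF Dh _ RD] prob_query_search[OF Dh _ RD]] by simp
  moreover have "0 \<le> 1.5 * (real e - 1) * (1 - adv_1LD_d D R Ad)"
    using adv_1LD_d_le_1[OF valid Dh _ RD] e by simp
  moreover have "0 \<le> real D ^ 2 / real R" by simp
  ultimately show "1 - real D ^ 2 / real R - 1.5 * (real e - 1) * (1 - adv_1LD_d D R Ad)
      \<le> adv_1LD_s D R (query_search D R)" by linarith
qed

lemma search_alg_no_queries:
  assumes Dh: "D = 2 ^ e + 2 ^ e" and e: "3 \<le> e" and RD: "R \<ge> D" and nq: "num_queries Ad = 0"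
  shows "\<exists>As. valid_qalg D R As \<and> real (num_queries As) \<le> 3 * real q * (real e + 1) \<and>
           1 - real D ^ 2 / real R - 1.5 * (real e - 1) * (1 - adv_1LD_d D R Ad) \<le> adv_1LD_s D R As"
proof (intro exI conjI)
  show "valid_qalg D R trivial_alg" "real (num_queries trivial_alg) \<le> 3 * real q * (real e + 1)"
    using trivial_alg_props(1)[of D R] trivial_alg_props(2) by simp_all
  have "1 \<le> 1.5 * (real e - 1)" using e by simp
  moreover have "1 \<le> 1 - adv_1LD_d D R Ad"
    using adv_1LD_d_nonpos_if_no_queries[OF nq Dh _ RD] by simp
  ultimately have "1 * 1 \<le> 1.5 * (real e - 1) * (1 - adv_1LD_d D R Ad)" by (intro mult_mono) auto
  moreover have "0 \<le> adv_1LD_s D R trivial_alg"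
    by (rule adv_1LD_s_ge[OF ex_lang_1LD[OF Dh _ RD] prob_out_nonneg]) simp
  moreover have "0 \<le> real D ^ 2 / real R" by simp
  ultimately show "1 - real D ^ 2 / real R - 1.5 * (real e - 1) * (1 - adv_1LD_d D R Ad)
      \<le> adv_1LD_s D R trivial_alg" by linarith
qed

lemma search_alg_bits:
  assumes Dh: "D = 2 ^ e + 2 ^ e" and e: "3 \<le> e" and RD: "R \<ge> D"
    and valid: "valid_qalg D R Ad" and nq: "1 \<le> num_queries Ad" "num_queries Ad \<le> q"
  shows "\<exists>As. valid_qalg D R As \<and> real (num_queries As) \<le> 3 * real q * (real e + 1) \<and>
           1 - real D ^ 2 / real R - 1.5 * (real e - 1) * (1 - adv_1LD_d D R Ad) \<le> adv_1LD_s D R As"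
proof (intro exI conjI)
  have e1: "1 \<le> e" using e by simp
  note props = bit_search_props[OF Dh refl e1 RD valid nq(1)]
  show "valid_qalg D R (bit_search D R Ad e)" by (rule props(1))
  have "2 * e * num_queries Ad \<le> 3 * (e + 1) * q" using nq(2) by (intro mult_mono) auto
  then show "real (num_queries (bit_search D R Ad e)) \<le> 3 * real q * (real e + 1)"
    unfolding props(2) by (fastforce simp: algebra_simps dest: of_nat_mono[where 'a = real])
  have "1 - real D ^ 2 / R - e * (1 - adv_1LD_d D R Ad) \<le> adv_1LD_s D R (bit_search D R Ad e)"
    by (rule adv_1LD_s_ge[OF ex_lang_1LD[OF Dh _ RD] prob_bit_search_ge[OF Dh refl e1 RD valid nq(1)]]) simp_all
  moreover have "e * (1 - adv_1LD_d D R Ad) \<le> 1.5 * (real e - 1) * (1 - adv_1LD_d D R Ad)"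
    using e adv_1LD_d_le_1[OF valid Dh _ RD] by (intro mult_right_mono) auto
  ultimately show "1 - real D ^ 2 / real R - 1.5 * (real e - 1) * (1 - adv_1LD_d D R Ad)
      \<le> adv_1LD_s D R (bit_search D R Ad e)" by linarith
qed

theorem lemma3:
  fixes D R q :: nat and Ad :: "bool qalg"
  assumes "\<exists>k. D = 2 ^ k" and "D \<ge> 4" and "R \<ge> D" and "q \<ge> 1"
    and "valid_qalg D R Ad" and "num_queries Ad \<le> q"
  shows "\<exists>As :: (nat \<times> nat) qalg. valid_qalg D R As \<and>
           real (num_queries As) \<le> 3 * real q * log 2 (real D) \<and>
           adv_1LD_s D R As \<ge> 1 - real D ^ 2 / real R
              - 1.5 * (log 2 (real D) - 2) * (1 - adv_1LD_d D R Ad)"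
proof -
  obtain t where Dt: "D = 2 ^ t" using assms(1) by blast
  have "t \<ge> 2"
  proof (rule ccontr)
    assume "\<not> t \<ge> 2"
    then have "D \<le> 2 ^ 1" unfolding Dt by (intro power_increasing) auto
    then show False using assms(2) by simp
  qed
  define e where "e = t - 1"
  have Dh: "D = 2 ^ e + 2 ^ e" and e1: "e \<ge> 1" using Dt \<open>t \<ge> 2\<close> by (simp_all add: e_def flip: mult_2 power_Suc)
  have "log 2 (real D) = real e + 1" and "real e + 1 - 2 = real e - 1"
    using Dt \<open>t \<ge> 2\<close> by (simp_all add: e_def log_pow_cancel)
  then have thesis_iff: "?thesis \<longleftrightarrow> (\<exists>As. valid_qalg D R As \<and> real (num_queries As) \<le> 3 * real q * (real e + 1) \<and>
      1 - real D ^ 2 / real R - 1.5 * (real e - 1) * (1 - adv_1LD_d D R Ad) \<le> adv_1LD_s D R As)"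
    by simp
  consider "e \<le> 2" | "e \<ge> 3" "num_queries Ad = 0" | "e \<ge> 3" "num_queries Ad \<ge> 1" by linarith
  then show ?thesis
    unfolding thesis_iff
    using search_alg_few_lists[OF Dh e1 _ assms(3,4,5)] search_alg_no_queries[OF Dh _ assms(3)]
      search_alg_bits[OF Dh _ assms(3,5) _ assms(6)]
    by cases blast+
qed

end
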